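(* Let $S\subset\mathbb{R}^p$ be a compact set with $\mathrm{cl}(\mathrm{int}(S))=S$. Let $w:\mathrm{int}(S)\to[w_-,+\infty)$ be integrable on $\mathrm{int}(S)$ with $w_->0$, and let $\mu$ be the measure defined by $\mu(A)=\int_{A\cap S}w(\mathbf{x})\,d\mathbf{x}$ for measurable $A$, with $\mu(S)=1$. Let $(\delta_k)_{k\in\mathbb{N}}$ be a decreasing sequence of positive numbers converging to $0$. For every $k$, let $d_k$ be the smallest positive integer such that \[2^{3-\frac{\delta_k d_k}{\delta_k+\mathrm{diam}(S)}}\,d_k^p\left(\frac{e}{p}\right)^p\exp\left(\frac{p^2}{d_k}\right)\le\alpha_k,\qquad\text{where}\quad \alpha_k:=w_-\,\delta_k^p\,\omega_p\,\frac{(d_k+1)(d_k+2)(d_k+3)}{(d_k+p+1)(d_k+p+2)(2d_k+p+6)}.\] For every $k$ let $S_k=\{\mathbf{x}\in\mathbb{R}^p:\ s(d_k)\,\Lambda_{\mu,d_k}(\mathbf{x})\ge\alpha_k\}$. Then, as $k\to\infty$, $d_H(S_k,S)\to0$ and $d_H(\partial S_k,\partial S)\to0$.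
   Context: $\mathrm{diam}(S)$ is the diameter of $S$, $\omega_p=\frac{2\pi^{(p+1)/2}}{\Gamma((p+1)/2)}$, and $s(d)=\binom{p+d}{d}$. For a finite Borel measure $\nu$ on $\mathbb{R}^p$ with finite moments and $d\in\mathbb{N}$, the Christoffel function is $\Lambda_{\nu,d}(\xi)=\min\{\int P^2\,d\nu: P\in\mathbb{R}[X]_d,\ P(\xi)=1\}$, where $\mathbb{R}[X]_d$ is the space of real polynomials in $p$ variables of total degree at most $d$. $\partial A$ is the topological boundary of $A$, and $d_H(X,Y)=\max\{\sup_{\mathbf{x}\in X}\inf_{\mathbf{y}\in Y}\|\mathbf{x}-\mathbf{y}\|,\ \sup_{\mathbf{y}\in Y}\inf_{\mathbf{x}\in X}\|\mathbf{x}-\mathbf{y}\|\}$ is the Hausdorff distance. *)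

theory Defs
  imports "HOL-Analysis.Analysis"
begin

definition exps :: "nat \<Rightarrow> ('n::finite \<Rightarrow> nat) set" where
  "exps d = {a. (\<Sum>i\<in>UNIV. a i) \<le> d}"

text \<open>Real polynomials in p = CARD('n) variables of total degree at most d, as functions.\<close>
definition polys_deg :: "nat \<Rightarrow> (real^'n::finite \<Rightarrow> real) set" where
  "polys_deg d = {P. \<exists>c :: ('n \<Rightarrow> nat) \<Rightarrow> real.
       P = (\<lambda>x. \<Sum>a\<in>exps d. c a * (\<Prod>i\<in>UNIV. (x $ i) ^ (a i)))}"

definition christoffel :: "(real^'n::finite) measure \<Rightarrow> nat \<Rightarrow> real^'n \<Rightarrow> real" where
  "christoffel \<nu> d \<xi> = Inf {(\<integral>x. (P x)^2 \<partial>\<nu>) | P. P \<in> polys_deg d \<and> P \<xi> = 1}"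

definition omega :: "nat \<Rightarrow> real" where
  "omega p = 2 * pi powr ((real p + 1) / 2) / Gamma ((real p + 1) / 2)"

definition sdim :: "nat \<Rightarrow> nat \<Rightarrow> nat" where
  "sdim p d = (p + d) choose d"

definition hausdorff_dist :: "('a::metric_space) set \<Rightarrow> 'a set \<Rightarrow> real" where
  "hausdorff_dist X Y = max (SUP x\<in>X. infdist x Y) (SUP y\<in>Y. infdist y X)"

definition alpha_th :: "nat \<Rightarrow> real \<Rightarrow> real \<Rightarrow> nat \<Rightarrow> real" where
  "alpha_th p wm \<delta> d = wm * \<delta> ^ p * omega p *
     ((real d + 1) * (real d + 2) * (real d + 3)) /
     ((real d + real p + 1) * (real d + real p + 2) * (2 * real d + real p + 6))"

definition deg_cond :: "nat \<Rightarrow> real \<Rightarrow> real \<Rightarrow> real \<Rightarrow> nat \<Rightarrow> bool" where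
  "deg_cond p diamS wm \<delta> d \<longleftrightarrow>
     2 powr (3 - \<delta> * real d / (\<delta> + diamS)) * real d ^ p * (exp 1 / real p) ^ p
       * exp (real p ^ 2 / real d) \<le> alpha_th p wm \<delta> d"

end

theory Submission
  imports Defs "HOL-Computational_Algebra.Polynomial"
begin

text \<open>Two estimates on the Christoffel function \<open>\<Lambda>\<close> drive the proof. Near a point \<open>x\<close> with
  \<open>ball x e \<subseteq> interior S\<close> the density is at least \<open>w\<^sub>-\<close>, and the one-dimensional inequality
  \<open>q(0)^2 \<le> 2(d + 1)/(\<pi> r) \<integral>[-r, r] q^2\<close> for \<open>deg q \<le> d\<close>, applied coordinate by coordinate on a
  cube, gives \<open>s(d) \<Lambda>(x) \<ge> w\<^sub>- (\<pi> e / 4p^2)^p\<close> uniformly in \<open>d\<close>; since \<open>\<alpha>\<^sub>k \<rightarrow> 0\<close>, such points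
  eventually lie in \<open>S\<^sub>k\<close>. At distance \<open>\<ge> r\<close> from \<open>S\<close> the needle polynomial
  \<open>(1 - |y - x|^2 / R^2)^\<lfloor>d/2\<rfloor>\<close> gives \<open>\<Lambda>(x) \<le> q^(d - 1)\<close> with \<open>q = 1 - r^2/(r + diam S)^2 < 1\<close>,
  and the degree condition forces \<open>d\<^sub>k \<rightarrow> \<infinity>\<close> so that eventually \<open>s(d\<^sub>k) q^(d\<^sub>k - 1) < \<alpha>\<^sub>k\<close>.
  Thus \<open>S\<^sub>k\<close> is squeezed between the points deep inside \<open>S\<close> and thin neighbourhoods of \<open>S\<close>; as \<open>S\<close>
  is the closure of its interior, this gives Hausdorff convergence of the sets and, since balls
  are connected, of their boundaries.\<close>

section \<open>Polynomials of bounded total degree\<close>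

definition monomial :: "('n::finite \<Rightarrow> nat) \<Rightarrow> real^'n \<Rightarrow> real" where
  "monomial a x = (\<Prod>i\<in>UNIV. (x $ i) ^ a i)"

lemma finite_exps: "finite (exps d :: ('n::finite \<Rightarrow> nat) set)"
proof (rule finite_subset)
  show "exps d \<subseteq> PiE UNIV (\<lambda>_::'n. {..d})"
  proof
    fix a :: "'n \<Rightarrow> nat"
    assume "a \<in> exps d"
    then have "a i \<le> d" for i
      using member_le_sum[of i UNIV a] by (simp add: exps_def)
    then show "a \<in> PiE UNIV (\<lambda>_. {..d})" by auto
  qed
qed (simp add: finite_PiE)

lemma polys_deg_iff: "P \<in> polys_deg d \<longleftrightarrow> (\<exists>c. P = (\<lambda>x. \<Sum>a\<in>exps d. c a * monomial a x))"
  by (simp add: polys_deg_def monomial_def)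

lemma polys_deg_monomial:
  assumes "a \<in> exps d"
  shows "(\<lambda>x. c * monomial a x) \<in> polys_deg d"
  unfolding polys_deg_iff
proof (intro exI ext)
  fix x
  have "(\<Sum>b\<in>exps d. (if b = a then c else 0) * monomial b x) = (\<Sum>b\<in>exps d. if b = a then c * monomial b x else 0)"
    by (rule sum.cong) auto
  then show "c * monomial a x = (\<Sum>b\<in>exps d. (if b = a then c else 0) * monomial b x)"
    using assms by (simp add: finite_exps)
qed

lemma polys_deg_zero: "(\<lambda>x. 0) \<in> polys_deg d"
  unfolding polys_deg_iff by (rule exI[of _ "\<lambda>b. 0"]) simp

lemma polys_deg_add:
  assumes "P \<in> polys_deg d" "Q \<in> polys_deg d"
  shows "(\<lambda>x. P x + Q x) \<in> polys_deg d"
proof -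
  obtain c c' where "P = (\<lambda>x. \<Sum>a\<in>exps d. c a * monomial a x)" "Q = (\<lambda>x. \<Sum>a\<in>exps d. c' a * monomial a x)"
    using assms by (auto simp: polys_deg_iff)
  then show ?thesis
    unfolding polys_deg_iff by (intro exI[of _ "\<lambda>a. c a + c' a"]) (simp add: sum.distrib distrib_right)
qed

lemma polys_deg_cmult:
  assumes "P \<in> polys_deg d"
  shows "(\<lambda>x. k * P x) \<in> polys_deg d"
proof -
  obtain c where "P = (\<lambda>x. \<Sum>a\<in>exps d. c a * monomial a x)"
    using assms by (auto simp: polys_deg_iff)
  then show ?thesis
    unfolding polys_deg_iff by (intro exI[of _ "\<lambda>a. k * c a"]) (simp add: sum_distrib_left mult.assoc)
qed

lemma polys_deg_sum:
  "finite A \<Longrightarrow> (\<And>j. j \<in> A \<Longrightarrow> f j \<in> polys_deg d) \<Longrightarrow> (\<lambda>x. \<Sum>j\<in>A. f j x) \<in> polys_deg d"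
  by (induction A rule: finite_induct) (auto intro: polys_deg_zero polys_deg_add)

lemma polys_deg_mono:
  assumes "P \<in> polys_deg d" "d \<le> e"
  shows "P \<in> polys_deg e"
proof -
  obtain c where P: "P = (\<lambda>x. \<Sum>a\<in>exps d. c a * monomial a x)"
    using assms(1) by (auto simp: polys_deg_iff)
  have "exps d \<subseteq> exps e"
    using assms(2) by (auto simp: exps_def)
  then show ?thesis
    unfolding P by (intro polys_deg_sum polys_deg_monomial) (auto simp: finite_exps)
qed

lemma polys_deg_mult:
  assumes "P \<in> polys_deg d" "Q \<in> polys_deg e"
  shows "(\<lambda>x. P x * Q x) \<in> polys_deg (d + e)"
proof -
  obtain c c' where P: "P = (\<lambda>x. \<Sum>a\<in>exps d. c a * monomial a x)"
     and Q: "Q = (\<lambda>x. \<Sum>b\<in>exps e. c' b * monomial b x)"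
    using assms by (auto simp: polys_deg_iff)
  have "(\<lambda>x. P x * Q x) = (\<lambda>x. \<Sum>a\<in>exps d. \<Sum>b\<in>exps e. (c a * c' b) * monomial (\<lambda>i. a i + b i) x)"
    by (simp add: P Q monomial_def power_add prod.distrib sum_distrib_right sum_distrib_left mult_ac)
  also have "\<dots> \<in> polys_deg (d + e)"
    by (intro polys_deg_sum polys_deg_monomial) (simp_all add: finite_exps, auto simp: exps_def sum.distrib)
  finally show ?thesis .
qed

lemma polys_deg_const: "(\<lambda>x. c) \<in> polys_deg d"
  using polys_deg_monomial[of "\<lambda>_. 0" d c] by (simp add: exps_def monomial_def)

lemma polys_deg_coord:
  assumes "1 \<le> d"
  shows "(\<lambda>x. x $ i) \<in> polys_deg d"
proof -
  have "monomial (\<lambda>j. if j = i then 1 else 0) x = (\<Prod>j\<in>UNIV. if j = i then x $ j else 1)" for x :: "real^'a"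
    unfolding monomial_def by (rule prod.cong) auto
  then show ?thesis
    using polys_deg_monomial[of "\<lambda>j. if j = i then 1 else 0" d 1] assms by (simp add: exps_def)
qed

lemma polys_deg_power: "P \<in> polys_deg d \<Longrightarrow> (\<lambda>x. P x ^ m) \<in> polys_deg (d * m)"
proof (induction m)
  case 0
  then show ?case using polys_deg_const[of 1 0] by simp
next
  case (Suc m)
  then have "(\<lambda>x. P x * P x ^ m) \<in> polys_deg (d + d * m)" by (intro polys_deg_mult)
  then show ?case by (simp add: algebra_simps)
qed

lemma polys_deg_continuous: "P \<in> polys_deg d \<Longrightarrow> continuous_on UNIV P"
  unfolding polys_deg_iff monomial_def by (auto intro!: continuous_intros)

lemma polys_deg_borel_measurable: "P \<in> polys_deg d \<Longrightarrow> P \<in> borel_measurable borel"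
  by (intro borel_measurable_continuous_onI polys_deg_continuous)

lemma polys_deg_restrict_line:
  fixes y v :: "real^'n::finite"
  assumes "P \<in> polys_deg d"
  obtains q where "degree q \<le> d" "\<And>t. P (y + t *\<^sub>R v) = poly q t"
proof -
  obtain c where P: "P = (\<lambda>x. \<Sum>a\<in>exps d. c a * monomial a x)"
    using assms by (auto simp: polys_deg_iff)
  define q where "q = (\<Sum>a\<in>(exps d :: ('n \<Rightarrow> nat) set). [:c a:] * (\<Prod>i\<in>UNIV. [:y $ i, v $ i:] ^ a i))"
  have "degree q \<le> d"
    unfolding q_def
  proof (rule degree_sum_le)
    fix a :: "'n \<Rightarrow> nat"
    assume a: "a \<in> exps d"
    have "degree (\<Prod>i\<in>UNIV. [:y $ i, v $ i:] ^ a i) \<le> (\<Sum>i\<in>UNIV. degree ([:y $ i, v $ i:] ^ a i))"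
      using degree_prod_sum_le[of UNIV "\<lambda>i. [:y $ i, v $ i:] ^ a i"] by (simp add: o_def)
    also have "\<dots> \<le> (\<Sum>i\<in>UNIV. a i)"
    proof (rule sum_mono)
      fix i
      have "degree ([:y $ i, v $ i:] ^ a i) \<le> degree [:y $ i, v $ i:] * a i"
        by (rule degree_power_le)
      also have "\<dots> \<le> a i"
        by (simp add: degree_pCons_le)
      finally show "degree ([:y $ i, v $ i:] ^ a i) \<le> a i" .
    qed
    also have "\<dots> \<le> d"
      using a by (simp add: exps_def)
    finally show "degree ([:c a:] * (\<Prod>i\<in>UNIV. [:y $ i, v $ i:] ^ a i)) \<le> d"
      using degree_mult_le[of "[:c a:]" "\<Prod>i\<in>UNIV. [:y $ i, v $ i:] ^ a i"] by simp
  qed (simp add: finite_exps)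
  moreover have "P (y + t *\<^sub>R v) = poly q t" for t
    by (simp add: P q_def monomial_def poly_sum poly_prod algebra_simps)
  ultimately show ?thesis using that by blast
qed

section \<open>A Nikolskii-type inequality\<close>

definition sine_polys :: "nat \<Rightarrow> (real \<Rightarrow> real) set" where
  "sine_polys n = {f. \<exists>s. \<forall>t. f t = (\<Sum>j=1..n. s j * sin (real j * t))}"

lemma sine_polys_zero: "(\<lambda>t. 0) \<in> sine_polys n"
  unfolding sine_polys_def by (rule CollectI, rule exI[of _ "\<lambda>_. 0"]) simp

lemma sine_polys_add:
  assumes "f \<in> sine_polys n" "g \<in> sine_polys n"
  shows "(\<lambda>t. f t + g t) \<in> sine_polys n"
proof -
  obtain s s' where "\<And>t. f t = (\<Sum>j=1..n. s j * sin (real j * t))" "\<And>t. g t = (\<Sum>j=1..n. s' j * sin (real j * t))"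
    using assms by (auto simp: sine_polys_def)
  then show ?thesis
    unfolding sine_polys_def by (intro CollectI exI[of _ "\<lambda>j. s j + s' j"]) (simp add: sum.distrib distrib_right)
qed

lemma sine_polys_cmult:
  assumes "f \<in> sine_polys n"
  shows "(\<lambda>t. c * f t) \<in> sine_polys n"
proof -
  obtain s where "\<And>t. f t = (\<Sum>j=1..n. s j * sin (real j * t))"
    using assms by (auto simp: sine_polys_def)
  then show ?thesis
    unfolding sine_polys_def by (intro CollectI exI[of _ "\<lambda>j. c * s j"]) (simp add: sum_distrib_left mult.assoc)
qed

lemma sine_polys_sum:
  "finite A \<Longrightarrow> (\<And>i. i \<in> A \<Longrightarrow> f i \<in> sine_polys n) \<Longrightarrow> (\<lambda>t. \<Sum>i\<in>A. f i t) \<in> sine_polys n"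
  by (induction A rule: finite_induct) (auto intro: sine_polys_zero sine_polys_add)

lemma sine_polys_sin:
  assumes "1 \<le> k" "k \<le> n"
  shows "(\<lambda>t. sin (real k * t)) \<in> sine_polys n"
  unfolding sine_polys_def
proof (intro CollectI exI allI)
  fix t
  have "(\<Sum>j=1..n. (if j = k then 1 else 0) * sin (real j * t)) = (\<Sum>j=1..n. if j = k then sin (real j * t) else 0)"
    by (rule sum.cong) auto
  then show "sin (real k * t) = (\<Sum>j=1..n. (if j = k then 1 else 0) * sin (real j * t))"
    using assms by simp
qed

lemma sine_polys_mono:
  assumes "f \<in> sine_polys n" "n \<le> m"
  shows "f \<in> sine_polys m"
proof -
  obtain s where "\<And>t. f t = (\<Sum>j=1..n. s j * sin (real j * t))"
    using assms(1) by (auto simp: sine_polys_def)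
  then have "f = (\<lambda>t. \<Sum>j=1..n. s j * sin (real j * t))" by auto
  also have "\<dots> \<in> sine_polys m"
    using assms(2) by (intro sine_polys_sum sine_polys_cmult sine_polys_sin) auto
  finally show ?thesis .
qed

lemma sine_polys_mult_cos:
  assumes "f \<in> sine_polys n"
  shows "(\<lambda>t. f t * cos t) \<in> sine_polys (n + 1)"
proof -
  obtain s where f: "\<And>t. f t = (\<Sum>j=1..n. s j * sin (real j * t))"
    using assms by (auto simp: sine_polys_def)
  have "(\<lambda>t. s j * (sin (real j * t) * cos t)) \<in> sine_polys (n + 1)" if j: "j \<in> {1..n}" for j
  proof -
    have "(\<lambda>t. sin ((real j - 1) * t)) \<in> sine_polys (n + 1)"
    proof (cases "j = 1")
      case False
      then have "(\<lambda>t. sin (real (j - 1) * t)) \<in> sine_polys (n + 1)"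
        using j by (intro sine_polys_sin) auto
      then show ?thesis using j by (simp add: of_nat_diff)
    qed (simp add: sine_polys_zero)
    moreover have "(\<lambda>t. sin (real (j + 1) * t)) \<in> sine_polys (n + 1)"
      using j by (intro sine_polys_sin) auto
    ultimately have "(\<lambda>t. (s j / 2) * (sin (real (j + 1) * t) + sin ((real j - 1) * t))) \<in> sine_polys (n + 1)"
      by (intro sine_polys_cmult sine_polys_add)
    also have "(\<lambda>t. (s j / 2) * (sin (real (j + 1) * t) + sin ((real j - 1) * t))) = (\<lambda>t. s j * (sin (real j * t) * cos t))"
      by (simp add: sin_add sin_diff algebra_simps)
    finally show ?thesis .
  qed
  then have "(\<lambda>t. \<Sum>j=1..n. s j * (sin (real j * t) * cos t)) \<in> sine_polys (n + 1)"
    by (intro sine_polys_sum) auto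
  then show ?thesis
    by (simp add: f sum_distrib_right mult.assoc)
qed

lemma sine_polys_poly_cos:
  assumes "degree q \<le> d"
  shows "(\<lambda>t. poly q (r * cos t) * sin t) \<in> sine_polys (d + 1)"
proof -
  have cos_power: "(\<lambda>t. cos t ^ k * sin t) \<in> sine_polys (k + 1)" for k
  proof (induction k)
    case 0
    then show ?case using sine_polys_sin[of 1 1] by simp
  next
    case (Suc k)
    from sine_polys_mult_cos[OF Suc] show ?case by (simp add: mult_ac)
  qed
  have "(\<lambda>t. \<Sum>k\<le>degree q. (coeff q k * r ^ k) * (cos t ^ k * sin t)) \<in> sine_polys (d + 1)"
    using assms by (intro sine_polys_sum sine_polys_cmult sine_polys_mono[OF cos_power]) auto
  then show ?thesis
    by (simp add: poly_altdef sum_distrib_right sum_distrib_left power_mult_distrib mult_ac)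
qed

lemma has_integral_sin_mult_sin:
  assumes "1 \<le> j" "1 \<le> l"
  shows "((\<lambda>t. sin (real j * t) * sin (real l * t)) has_integral (if j = l then pi / 2 else 0)) {0..pi}"
proof (cases "j = l")
  case True
  let ?F = "\<lambda>t. t / 2 - sin (2 * real j * t) / (4 * real j)"
  have "((\<lambda>t. sin (real j * t) * sin (real l * t)) has_integral (?F pi - ?F 0)) {0..pi}"
  proof (rule fundamental_theorem_of_calculus)
    fix t
    have "(?F has_real_derivative (1/2 - cos (2 * real j * t) / 2)) (at t)"
      using assms by (auto intro!: derivative_eq_intros)
    moreover have "1/2 - cos (2 * real j * t) / 2 = sin (real j * t) * sin (real l * t)"
      using cos_double_sin[of "real j * t"] True by (simp add: mult.assoc power2_eq_square field_simps)
    ultimately show "(?F has_vector_derivative sin (real j * t) * sin (real l * t)) (at t within {0..pi})"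
      by (simp add: has_real_derivative_iff_has_vector_derivative[symmetric] has_field_derivative_at_within)
  qed simp
  moreover have "sin (2 * real j * pi) = 0"
    using sin_npi[of "2 * j"] by (simp add: mult_ac)
  ultimately show ?thesis using True by simp
next
  case False
  define a b where "a = real j - real l" and "b = real j + real l"
  have "a \<noteq> 0" "b \<noteq> 0"
    using False assms by (auto simp: a_def b_def)
  let ?F = "\<lambda>t. sin (a * t) / (2 * a) - sin (b * t) / (2 * b)"
  have "((\<lambda>t. sin (real j * t) * sin (real l * t)) has_integral (?F pi - ?F 0)) {0..pi}"
  proof (rule fundamental_theorem_of_calculus)
    fix t
    have "(?F has_real_derivative (cos (a * t) / 2 - cos (b * t) / 2)) (at t)"
      using \<open>a \<noteq> 0\<close> \<open>b \<noteq> 0\<close> by (auto intro!: derivative_eq_intros)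
    moreover have "cos (a * t) / 2 - cos (b * t) / 2 = sin (real j * t) * sin (real l * t)"
      unfolding a_def b_def using cos_diff[of "real j * t" "real l * t"] cos_add[of "real j * t" "real l * t"]
      by (simp add: left_diff_distrib distrib_right field_simps)
    ultimately show "(?F has_vector_derivative sin (real j * t) * sin (real l * t)) (at t within {0..pi})"
      by (simp add: has_real_derivative_iff_has_vector_derivative[symmetric] has_field_derivative_at_within)
  qed simp
  moreover have "sin (a * pi) = 0"
    using sin_times_pi_eq_0[of a] by (simp add: a_def b_def)
  moreover have "sin (b * pi) = 0"
    using sin_npi[of "j + l"] by (simp add: a_def b_def)
  ultimately show ?thesis using False by simp
qed

lemma sine_poly_sq_has_integral:
  assumes "\<And>t. f t = (\<Sum>j=1..n. s j * sin (real j * t))"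
  shows "((\<lambda>t. (f t)\<^sup>2) has_integral (pi / 2) * (\<Sum>j=1..n. (s j)\<^sup>2)) {0..pi}"
proof -
  have f_sq: "(\<lambda>t. (f t)\<^sup>2) = (\<lambda>t. \<Sum>j=1..n. \<Sum>l=1..n. (s j * s l) * (sin (real j * t) * sin (real l * t)))"
    by (simp add: assms fun_eq_iff power2_eq_square sum_product mult_ac)
  have integral: "((\<lambda>t. \<Sum>j=1..n. \<Sum>l=1..n. (s j * s l) * (sin (real j * t) * sin (real l * t)))
          has_integral (\<Sum>j=1..n. \<Sum>l=1..n. (s j * s l) * (if j = l then pi / 2 else 0))) {0..pi}"
    by (intro has_integral_sum has_integral_mult_right has_integral_sin_mult_sin) auto
  have diagonal: "(\<Sum>j=1..n. \<Sum>l=1..n. (s j * s l) * (if j = l then pi / 2 else 0)) = (pi / 2) * (\<Sum>j=1..n. (s j)\<^sup>2)"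
    by (simp add: if_distrib[of "\<lambda>x. _ * x"] power2_eq_square sum_distrib_left mult_ac cong: if_cong)
  show ?thesis
    using integral unfolding f_sq diagonal .
qed

lemma sine_poly_sq_le_integral:
  assumes "f \<in> sine_polys n"
  shows "(f t)\<^sup>2 \<le> (2 * real n / pi) * integral {0..pi} (\<lambda>t. (f t)\<^sup>2)"
proof -
  obtain s where f: "\<And>t. f t = (\<Sum>j=1..n. s j * sin (real j * t))"
    using assms by (auto simp: sine_polys_def)
  have "(f t)\<^sup>2 \<le> (\<Sum>j=1..n. (s j)\<^sup>2) * (\<Sum>j=1..n. (sin (real j * t))\<^sup>2)"
    unfolding f by (rule Cauchy_Schwarz_ineq_sum)
  also have "\<dots> \<le> (\<Sum>j=1..n. (s j)\<^sup>2) * (\<Sum>j=1..n. 1)"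
    by (intro mult_left_mono sum_mono sum_nonneg) (auto simp: abs_square_le_1)
  also have "\<dots> = (2 * real n / pi) * ((pi / 2) * (\<Sum>j=1..n. (s j)\<^sup>2))"
    by simp
  also have "\<dots> = (2 * real n / pi) * integral {0..pi} (\<lambda>t. (f t)\<^sup>2)"
    using sine_poly_sq_has_integral[OF f] by (simp add: integral_unique)
  finally show ?thesis .
qed

lemma has_integral_sin_mult_comp_cos:
  fixes F :: "real \<Rightarrow> real"
  assumes F: "continuous_on {-r..r} F" and r: "r > 0"
  shows "((\<lambda>t. sin t * F (r * cos t)) has_integral integral {-r..r} F / r) {0..pi}"
proof -
  have "((\<lambda>t. (- r * sin t) *\<^sub>R F (r * cos t)) has_integral
      (integral {r * cos 0..r * cos pi} F - integral {r * cos pi..r * cos 0} F)) {0..pi}"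
  proof (rule has_integral_substitution_general[of "{}" 0 pi "\<lambda>t. r * cos t" "-r" r])
    show "(\<lambda>t. r * cos t) ` {0..pi} \<subseteq> {-r..r}"
    proof clarify
      fix t
      show "r * cos t \<in> {-r..r}"
        using r mult_left_mono[of "cos t" 1 r] mult_left_mono[of "-1" "cos t" r] by auto
    qed
    show "((\<lambda>t. r * cos t) has_real_derivative (- r * sin t)) (at t within {0..pi})" for t
      by (auto intro!: derivative_eq_intros)
  qed (use F in \<open>auto intro!: continuous_intros\<close>)
  then have "((\<lambda>t. (- r) * (sin t * F (r * cos t))) has_integral (- integral {-r..r} F)) {0..pi}"
    using r by (simp add: integral_empty mult.assoc)
  from has_integral_mult_right[OF this, of "- 1 / r"] show ?thesis
    using r by (simp add: field_simps)
qed

text \<open>Substituting \<open>t = r cos \<theta>\<close> turns \<open>q\<close> into the sine polynomial \<open>q (r cos \<theta>) sin \<theta>\<close>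
  of order \<open>d + 1\<close>, whose value at \<open>\<theta> = \<pi>/2\<close> is \<open>q 0\<close>; as \<open>sin\<^sup>2 \<le> sin\<close> on \<open>[0, \<pi>]\<close>,
  its squared \<open>L\<^sup>2\<close> norm is at most \<open>1/r\<close> times that of \<open>q\<close> on \<open>[-r, r]\<close>.\<close>
lemma poly_sq_0_le_integral:
  fixes q :: "real poly"
  assumes "degree q \<le> d" and r: "r > 0"
  shows "pi * r / (2 * (real d + 1)) * (poly q 0)\<^sup>2 \<le> integral {-r..r} (\<lambda>t. (poly q t)\<^sup>2)"
proof -
  define F where "F = (\<lambda>t. (poly q t)\<^sup>2)"
  define f where "f = (\<lambda>t. poly q (r * cos t) * sin t)"
  have F_int: "((\<lambda>t. sin t * F (r * cos t)) has_integral integral {-r..r} F / r) {0..pi}"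
    unfolding F_def by (intro has_integral_sin_mult_comp_cos continuous_intros r)
  have "integral {0..pi} (\<lambda>t. (f t)\<^sup>2) \<le> integral {0..pi} (\<lambda>t. sin t * F (r * cos t))"
  proof (rule integral_le)
    show "(\<lambda>t. (f t)\<^sup>2) integrable_on {0..pi}"
      unfolding f_def by (intro integrable_continuous_interval continuous_intros)
    show "(\<lambda>t. sin t * F (r * cos t)) integrable_on {0..pi}"
      using F_int by blast
    show "(f t)\<^sup>2 \<le> sin t * F (r * cos t)" if "t \<in> {0..pi}" for t
    proof -
      have "0 \<le> sin t" using that by (auto intro: sin_ge_zero)
      then have "(sin t * sin t) * F (r * cos t) \<le> sin t * F (r * cos t)"
        by (intro mult_right_mono) (auto simp: F_def mult_left_le)
      then show ?thesis
        unfolding f_def F_def by (simp add: power2_eq_square mult_ac)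
    qed
  qed
  then have f_int_le: "integral {0..pi} (\<lambda>t. (f t)\<^sup>2) \<le> integral {-r..r} F / r"
    using F_int by (simp add: integral_unique)
  have "(poly q 0)\<^sup>2 \<le> (2 * (real d + 1) / pi) * integral {0..pi} (\<lambda>t. (f t)\<^sup>2)"
    using sine_poly_sq_le_integral[OF sine_polys_poly_cos[OF assms(1)], of r "pi / 2"]
    by (simp add: f_def add.commute)
  also have "\<dots> \<le> (2 * (real d + 1) / pi) * (integral {-r..r} F / r)"
    using f_int_le by (intro mult_left_mono) auto
  finally have "pi * r / (2 * (real d + 1)) * (poly q 0)\<^sup>2
               \<le> pi * r / (2 * (real d + 1)) * ((2 * (real d + 1) / pi) * (integral {-r..r} F / r))"
    using r by (intro mult_left_mono) auto
  also have "\<dots> = integral {-r..r} F"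
    using r by (simp add: divide_simps)
  finally show ?thesis
    unfolding F_def .
qed

lemma poly_sq_le_segment_nn_integral:
  assumes P: "P \<in> polys_deg d" and r: "r > 0"
  shows "ennreal (pi * r / (2 * (real d + 1)) * (P y)\<^sup>2)
           \<le> (\<integral>\<^sup>+ t. ennreal ((P (y + t *\<^sub>R v))\<^sup>2) * indicator {-r..r} t \<partial>lborel)"
proof -
  obtain q where "degree q \<le> d" and q: "\<And>t. P (y + t *\<^sub>R v) = poly q t"
    using polys_deg_restrict_line[OF P] by blast
  have "((\<lambda>t. (poly q t)\<^sup>2) has_integral integral {-r..r} (\<lambda>t. (poly q t)\<^sup>2)) {-r..r}"
    by (intro integrable_integral integrable_continuous_interval continuous_intros)
  then have "(\<integral>\<^sup>+ t. ennreal ((poly q t)\<^sup>2) * indicator {-r..r} t \<partial>lborel) = integral {-r..r} (\<lambda>t. (poly q t)\<^sup>2)"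
    by (rule nn_integral_has_integral_lebesgue'[rotated]) simp
  moreover have "pi * r / (2 * (real d + 1)) * (poly q 0)\<^sup>2 \<le> integral {-r..r} (\<lambda>t. (poly q t)\<^sup>2)"
    by (rule poly_sq_0_le_integral) fact+
  ultimately show ?thesis
    using q[of 0] by (simp add: q ennreal_leI)
qed

lemma nn_integral_poly_sq_slice_ge:
  fixes P :: "real^'n::finite \<Rightarrow> real" and J :: "(real^'n) set"
  assumes P: "P \<in> polys_deg d" and r: "r > 0" and "finite J" "i \<notin> J"
  shows "ennreal (pi * r / (2 * (real d + 1)))
           * (ennreal ((P (y + (\<Sum>b\<in>J. x b *\<^sub>R b)))\<^sup>2) * (\<Prod>b\<in>J. indicator {-r..r} (x b)))
         \<le> (\<integral>\<^sup>+ t. ennreal ((P (y + (\<Sum>b\<in>insert i J. (x(i := t)) b *\<^sub>R b)))\<^sup>2)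
                * (\<Prod>b\<in>insert i J. indicator {-r..r} ((x(i := t)) b)) \<partial>lborel)"
proof -
  define c where "c = pi * r / (2 * (real d + 1))"
  have "c \<ge> 0" using r by (simp add: c_def)
  have [measurable]: "P \<in> borel_measurable borel"
    by (rule polys_deg_borel_measurable[OF P])
  let ?y = "y + (\<Sum>b\<in>J. x b *\<^sub>R b)" and ?I = "\<Prod>b\<in>J. indicator {-r..r} (x b) :: ennreal"
  have "ennreal c * ennreal ((P ?y)\<^sup>2)
          \<le> (\<integral>\<^sup>+ t. ennreal ((P (?y + t *\<^sub>R i))\<^sup>2) * indicator {-r..r} t \<partial>lborel)"
    using poly_sq_le_segment_nn_integral[OF P r, of ?y i, folded c_def] \<open>c \<ge> 0\<close>
    by (simp add: ennreal_mult)
  then have "ennreal c * (ennreal ((P ?y)\<^sup>2) * ?I)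
          \<le> (\<integral>\<^sup>+ t. ennreal ((P (?y + t *\<^sub>R i))\<^sup>2) * indicator {-r..r} t \<partial>lborel) * ?I"
    unfolding mult.assoc[symmetric] by (rule mult_right_mono) simp
  also have "\<dots> = (\<integral>\<^sup>+ t. ennreal ((P (?y + t *\<^sub>R i))\<^sup>2) * indicator {-r..r} t * ?I \<partial>lborel)"
    by (rule nn_integral_multc[symmetric]) measurable
  also have "\<dots> = (\<integral>\<^sup>+ t. ennreal ((P (y + (\<Sum>b\<in>insert i J. (x(i := t)) b *\<^sub>R b)))\<^sup>2)
                       * (\<Prod>b\<in>insert i J. indicator {-r..r} ((x(i := t)) b)) \<partial>lborel)"
  proof (rule nn_integral_cong)
    fix t
    have "(\<Sum>b\<in>J. (x(i := t)) b *\<^sub>R b) = (\<Sum>b\<in>J. x b *\<^sub>R b)"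
      "(\<Prod>b\<in>J. indicator {-r..r} ((x(i := t)) b) :: ennreal) = ?I"
      using \<open>i \<notin> J\<close> by (auto intro!: sum.cong prod.cong)
    then show "ennreal ((P (?y + t *\<^sub>R i))\<^sup>2) * indicator {-r..r} t * ?I
        = ennreal ((P (y + (\<Sum>b\<in>insert i J. (x(i := t)) b *\<^sub>R b)))\<^sup>2)
            * (\<Prod>b\<in>insert i J. indicator {-r..r} ((x(i := t)) b))"
      using \<open>finite J\<close> \<open>i \<notin> J\<close> by (simp add: algebra_simps)
  qed
  finally show ?thesis
    unfolding c_def .
qed

lemma nn_integral_poly_sq_product_ge:
  fixes P :: "real^'n::finite \<Rightarrow> real" and J :: "(real^'n) set"
  assumes P: "P \<in> polys_deg d" and r: "r > 0" and "finite J"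
  shows "ennreal ((pi * r / (2 * (real d + 1))) ^ card J * (P y)\<^sup>2)
     \<le> (\<integral>\<^sup>+ f. ennreal ((P (y + (\<Sum>b\<in>J. f b *\<^sub>R b)))\<^sup>2) * (\<Prod>b\<in>J. indicator {-r..r} (f b))
          \<partial>Pi\<^sub>M J (\<lambda>_. lborel))"
  using \<open>finite J\<close>
proof (induction J arbitrary: y rule: finite_induct)
  case empty
  interpret product_sigma_finite "\<lambda>_. lborel :: real measure" by standard
  show ?case by (subst nn_integral_empty) auto
next
  case (insert i J)
  interpret product_sigma_finite "\<lambda>_. lborel :: real measure" by standard
  define c where "c = pi * r / (2 * (real d + 1))"
  have "c \<ge> 0" using r by (simp add: c_def)
  have [measurable]: "P \<in> borel_measurable borel"
    by (rule polys_deg_borel_measurable[OF P])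
  let ?G = "\<lambda>f. ennreal ((P (y + (\<Sum>b\<in>insert i J. f b *\<^sub>R b)))\<^sup>2) * (\<Prod>b\<in>insert i J. indicator {-r..r} (f b))"
  have "?G \<in> borel_measurable (Pi\<^sub>M (insert i J) (\<lambda>_. lborel))"
    by measurable
  have "ennreal (c ^ card (insert i J) * (P y)\<^sup>2) = ennreal c * ennreal (c ^ card J * (P y)\<^sup>2)"
    using insert.hyps \<open>c \<ge> 0\<close> by (simp add: ennreal_mult[symmetric] mult.assoc)
  also have "\<dots> \<le> ennreal c * (\<integral>\<^sup>+ x. ennreal ((P (y + (\<Sum>b\<in>J. x b *\<^sub>R b)))\<^sup>2)
                   * (\<Prod>b\<in>J. indicator {-r..r} (x b)) \<partial>Pi\<^sub>M J (\<lambda>_. lborel))"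
    using insert.IH[of y] unfolding c_def by (rule mult_left_mono) simp
  also have "\<dots> = (\<integral>\<^sup>+ x. ennreal c * (ennreal ((P (y + (\<Sum>b\<in>J. x b *\<^sub>R b)))\<^sup>2)
                   * (\<Prod>b\<in>J. indicator {-r..r} (x b))) \<partial>Pi\<^sub>M J (\<lambda>_. lborel))"
    by (rule nn_integral_cmult[symmetric]) measurable
  also have "\<dots> \<le> (\<integral>\<^sup>+ x. (\<integral>\<^sup>+ t. ?G (x(i := t)) \<partial>lborel) \<partial>Pi\<^sub>M J (\<lambda>_. lborel))"
    unfolding c_def by (intro nn_integral_mono nn_integral_poly_sq_slice_ge P r insert.hyps)
  also have "\<dots> = integral\<^sup>N (Pi\<^sub>M (insert i J) (\<lambda>_. lborel)) ?G"
    by (rule product_nn_integral_insert[symmetric]) fact+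
  finally show ?case unfolding c_def .
qed

lemma poly_sq_le_cube_nn_integral:
  fixes P :: "real^'n::finite \<Rightarrow> real"
  assumes P: "P \<in> polys_deg d" and r: "r > 0"
  shows "ennreal ((pi * r / (2 * (real d + 1))) ^ CARD('n) * (P y)\<^sup>2)
     \<le> (\<integral>\<^sup>+ z. ennreal ((P (y + z))\<^sup>2) * indicator (cbox (- (r *\<^sub>R One)) (r *\<^sub>R One)) z \<partial>lborel)"
proof -
  let ?C = "cbox (- (r *\<^sub>R One)) (r *\<^sub>R One) :: (real^'n) set"
  have [measurable]: "P \<in> borel_measurable borel"
    by (rule polys_deg_borel_measurable[OF P])
  have cube: "indicator ?C (\<Sum>b\<in>Basis. f b *\<^sub>R b) = (\<Prod>b\<in>Basis. indicator {-r..r} (f b) :: ennreal)" for f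
  proof -
    have "(\<Sum>b'\<in>Basis. f b' *\<^sub>R b' :: real^'n) \<bullet> b = f b" if "b \<in> Basis" for b
      using that by (simp add: inner_sum_left inner_Basis if_distrib[of "\<lambda>x. _ * x"] cong: if_cong)
    then have "(\<Sum>b\<in>Basis. f b *\<^sub>R b) \<in> ?C \<longleftrightarrow> (\<forall>b\<in>Basis. f b \<in> {-r..r})"
      by (simp add: mem_box)
    then show ?thesis
      by (auto simp: indicator_def prod_zero)
  qed
  have "ennreal ((pi * r / (2 * (real d + 1))) ^ CARD('n) * (P y)\<^sup>2)
     \<le> (\<integral>\<^sup>+ f. ennreal ((P (y + (\<Sum>b\<in>Basis. f b *\<^sub>R b)))\<^sup>2) * indicator ?C (\<Sum>b\<in>Basis. f b *\<^sub>R b)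
          \<partial>Pi\<^sub>M Basis (\<lambda>_. lborel))"
    using nn_integral_poly_sq_product_ge[OF P r, of Basis y] by (simp add: cube)
  also have "\<dots> = (\<integral>\<^sup>+ z. ennreal ((P (y + z))\<^sup>2) * indicator ?C z
                     \<partial>distr (Pi\<^sub>M Basis (\<lambda>_. lborel)) borel (\<lambda>f. \<Sum>b\<in>Basis. f b *\<^sub>R b))"
    by (subst nn_integral_distr) auto
  also have "\<dots> = (\<integral>\<^sup>+ z. ennreal ((P (y + z))\<^sup>2) * indicator ?C z \<partial>lborel)"
    by (simp add: lborel_eq[symmetric])
  finally show ?thesis .
qed

section \<open>Bounds on the Christoffel function\<close>

lemma nn_integral_density_le_on_support:
  assumes \<mu>: "\<mu> = density lborel g" and g: "g \<in> borel_measurable lborel"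
    and f: "f \<in> borel_measurable borel" and f_le: "\<And>x. g x \<noteq> 0 \<Longrightarrow> f x \<le> B"
  shows "(\<integral>\<^sup>+ x. ennreal (f x) \<partial>\<mu>) \<le> ennreal B * emeasure \<mu> UNIV"
proof -
  have "(\<integral>\<^sup>+ x. ennreal (f x) \<partial>\<mu>) = (\<integral>\<^sup>+ x. g x * ennreal (f x) \<partial>lborel)"
    unfolding \<mu> using g f by (simp add: nn_integral_density)
  also have "\<dots> \<le> (\<integral>\<^sup>+ x. ennreal B * g x \<partial>lborel)"
  proof (rule nn_integral_mono)
    show "g x * ennreal (f x) \<le> ennreal B * g x" for x
      using f_le[of x] by (cases "g x = 0") (simp_all add: mult.commute[of "g x"] mult_right_mono ennreal_leI)
  qed
  also have "\<dots> = ennreal B * emeasure \<mu> UNIV"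
    unfolding \<mu> using g by (simp add: nn_integral_cmult emeasure_density)
  finally show ?thesis .
qed

lemma nn_integral_poly_sq_finite:
  fixes \<mu> :: "(real^'n::finite) measure"
  assumes \<mu>: "\<mu> = density lborel g" and g: "g \<in> borel_measurable lborel"
    and "compact S" and support: "\<And>x. g x \<noteq> 0 \<Longrightarrow> x \<in> S" and "emeasure \<mu> UNIV < top"
    and P: "P \<in> polys_deg d"
  shows "(\<integral>\<^sup>+ x. ennreal ((P x)\<^sup>2) \<partial>\<mu>) < top"
proof -
  have "compact (P ` S)"
    using polys_deg_continuous[OF P] \<open>compact S\<close> by (auto intro: compact_continuous_image continuous_on_subset)
  then obtain M where M: "\<And>x. x \<in> S \<Longrightarrow> \<bar>P x\<bar> \<le> M"
    by (metis bounded_iff compact_imp_bounded image_eqI real_norm_def)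
  have "(\<integral>\<^sup>+ x. ennreal ((P x)\<^sup>2) \<partial>\<mu>) \<le> ennreal (M\<^sup>2) * emeasure \<mu> UNIV"
  proof (rule nn_integral_density_le_on_support[OF \<mu> g])
    show "(\<lambda>x. (P x)\<^sup>2) \<in> borel_measurable borel"
      using polys_deg_borel_measurable[OF P] by measurable
    show "(P x)\<^sup>2 \<le> M\<^sup>2" if "g x \<noteq> 0" for x
      using M[OF support[OF that]] by (metis abs_ge_zero power2_abs power_mono)
  qed
  also have "\<dots> < top"
    using \<open>emeasure \<mu> UNIV < top\<close> by (simp add: ennreal_mult_less_top)
  finally show ?thesis .
qed

lemma christoffel_le_of_poly_bounded_on_support:
  fixes \<mu> :: "(real^'n::finite) measure"
  assumes \<mu>: "\<mu> = density lborel g" and g: "g \<in> borel_measurable lborel"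
    and \<mu>_UNIV: "emeasure \<mu> UNIV = 1"
    and N: "N \<in> polys_deg d" "N y = 1" and "B \<ge> 0"
    and N_le: "\<And>x. g x \<noteq> 0 \<Longrightarrow> (N x)\<^sup>2 \<le> B"
  shows "christoffel \<mu> d y \<le> B"
proof -
  have [measurable]: "N \<in> borel_measurable borel"
    by (rule polys_deg_borel_measurable[OF N(1)])
  have "christoffel \<mu> d y \<le> (\<integral>x. (N x)\<^sup>2 \<partial>\<mu>)"
    unfolding christoffel_def using N by (intro cInf_lower bdd_belowI[of _ 0]) auto
  also have "\<dots> = enn2real (\<integral>\<^sup>+ x. ennreal ((N x)\<^sup>2) \<partial>\<mu>)"
    unfolding \<mu> by (rule integral_eq_nn_integral) auto
  also have "\<dots> \<le> enn2real (ennreal B * emeasure \<mu> UNIV)"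
    using nn_integral_density_le_on_support[OF \<mu> g _ N_le] \<mu>_UNIV by (intro enn2real_mono) auto
  also have "\<dots> = B"
    using \<mu>_UNIV \<open>B \<ge> 0\<close> by simp
  finally show ?thesis .
qed

lemma norm_le_of_mem_cube:
  fixes z :: "'a::euclidean_space" and r :: real
  assumes "z \<in> cbox (- (r *\<^sub>R One)) (r *\<^sub>R One)"
  shows "norm z \<le> DIM('a) * r"
proof -
  have "norm z \<le> (\<Sum>b\<in>Basis. \<bar>z \<bullet> b\<bar>)"
    by (rule norm_le_l1)
  also have "\<dots> \<le> (\<Sum>b\<in>(Basis :: 'a set). r)"
    using assms by (intro sum_mono) (auto simp: mem_box abs_le_iff)
  finally show ?thesis
    by simp
qed

lemma nn_integral_poly_sq_ge_of_density_ge_on_ball: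
  fixes \<mu> :: "(real^'n::finite) measure"
  assumes \<mu>: "\<mu> = density lborel g" and g: "g \<in> borel_measurable lborel" and P: "P \<in> polys_deg d"
    and g_ge: "\<And>z. z \<in> ball y e \<Longrightarrow> ennreal wm \<le> g z" and "wm \<ge> 0" "e > 0"
  shows "ennreal (wm * (pi * e / (4 * CARD('n) * (real d + 1))) ^ CARD('n) * (P y)\<^sup>2)
           \<le> (\<integral>\<^sup>+ x. ennreal ((P x)\<^sup>2) \<partial>\<mu>)"
proof -
  have [measurable]: "P \<in> borel_measurable borel"
    by (rule polys_deg_borel_measurable[OF P])
  define r where "r = e / (2 * CARD('n))"
  define C :: "(real^'n) set" where "C = cbox (- (r *\<^sub>R One)) (r *\<^sub>R One)"
  have "r > 0"
    using \<open>e > 0\<close> by (simp add: r_def)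
  have "y + z \<in> ball y e" if "z \<in> C" for z
    using norm_le_of_mem_cube[of z r] that \<open>e > 0\<close> by (simp add: C_def r_def dist_norm)
  then have g_ge_C: "ennreal wm * indicator C z \<le> g (y + z)" for z
    using g_ge by (auto simp: indicator_def)
  have "(pi * r / (2 * (real d + 1))) ^ CARD('n) = (pi * e / (4 * CARD('n) * (real d + 1))) ^ CARD('n)"
    unfolding r_def by (rule arg_cong[where f="\<lambda>x. x ^ _"]) (simp add: field_simps)
  then have "ennreal (wm * (pi * e / (4 * CARD('n) * (real d + 1))) ^ CARD('n) * (P y)\<^sup>2)
              = ennreal wm * ennreal ((pi * r / (2 * (real d + 1))) ^ CARD('n) * (P y)\<^sup>2)"
    using \<open>wm \<ge> 0\<close> \<open>e > 0\<close> by (simp add: ennreal_mult mult.assoc)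
  also have "\<dots> \<le> ennreal wm * (\<integral>\<^sup>+ z. ennreal ((P (y + z))\<^sup>2) * indicator C z \<partial>lborel)"
    unfolding C_def by (intro mult_left_mono poly_sq_le_cube_nn_integral P \<open>r > 0\<close>) simp
  also have "\<dots> = (\<integral>\<^sup>+ z. ennreal wm * indicator C z * ennreal ((P (y + z))\<^sup>2) \<partial>lborel)"
    by (subst nn_integral_cmult[symmetric]) (auto simp: C_def mult_ac)
  also have "\<dots> \<le> (\<integral>\<^sup>+ z. g (y + z) * ennreal ((P (y + z))\<^sup>2) \<partial>lborel)"
    by (intro nn_integral_mono mult_right_mono g_ge_C) simp
  also have "\<dots> = (\<integral>\<^sup>+ x. g x * ennreal ((P x)\<^sup>2) \<partial>lborel)"
    using g by (subst lborel_distr_plus[of y, symmetric]) (simp add: nn_integral_distr)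
  also have "\<dots> = (\<integral>\<^sup>+ x. ennreal ((P x)\<^sup>2) \<partial>\<mu>)"
    unfolding \<mu> using g by (simp add: nn_integral_density)
  finally show ?thesis .
qed

lemma christoffel_ge_of_density_ge_on_ball:
  fixes \<mu> :: "(real^'n::finite) measure"
  assumes \<mu>: "\<mu> = density lborel g" and g: "g \<in> borel_measurable lborel"
    and finite: "\<And>P. P \<in> polys_deg d \<Longrightarrow> (\<integral>\<^sup>+ x. ennreal ((P x)\<^sup>2) \<partial>\<mu>) < top"
    and g_ge: "\<And>z. z \<in> ball y e \<Longrightarrow> ennreal wm \<le> g z" and "wm \<ge> 0" "e > 0"
  shows "wm * (pi * e / (4 * CARD('n) * (real d + 1))) ^ CARD('n) \<le> christoffel \<mu> d y"
  unfolding christoffel_def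
proof (rule cInf_greatest)
  show "{\<integral>x. (P x)\<^sup>2 \<partial>\<mu> |P. P \<in> polys_deg d \<and> P y = 1} \<noteq> {}"
    using polys_deg_const[of 1 d] by blast
  fix v
  assume "v \<in> {\<integral>x. (P x)\<^sup>2 \<partial>\<mu> |P. P \<in> polys_deg d \<and> P y = 1}"
  then obtain P where P: "P \<in> polys_deg d" "P y = 1" and v: "v = (\<integral>x. (P x)\<^sup>2 \<partial>\<mu>)"
    by blast
  have "ennreal (wm * (pi * e / (4 * CARD('n) * (real d + 1))) ^ CARD('n) * (P y)\<^sup>2)
          \<le> (\<integral>\<^sup>+ x. ennreal ((P x)\<^sup>2) \<partial>\<mu>)"
    using g_ge \<open>wm \<ge> 0\<close> \<open>e > 0\<close> by (intro nn_integral_poly_sq_ge_of_density_ge_on_ball[OF \<mu> g P(1)]) auto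
  with P(2) have "ennreal (wm * (pi * e / (4 * CARD('n) * (real d + 1))) ^ CARD('n))
                    \<le> (\<integral>\<^sup>+ x. ennreal ((P x)\<^sup>2) \<partial>\<mu>)"
    by simp
  from enn2real_mono[OF this finite[OF P(1)]]
  have "wm * (pi * e / (4 * CARD('n) * (real d + 1))) ^ CARD('n) \<le> enn2real (\<integral>\<^sup>+ x. ennreal ((P x)\<^sup>2) \<partial>\<mu>)"
    using \<open>wm \<ge> 0\<close> \<open>e > 0\<close> by simp
  also have "\<dots> = v"
    unfolding v \<mu> using polys_deg_borel_measurable[OF P(1)] by (intro integral_eq_nn_integral[symmetric]) auto
  finally show "wm * (pi * e / (4 * CARD('n) * (real d + 1))) ^ CARD('n) \<le> v" .
qed

lemma sdim_ge:
  assumes "1 \<le> p"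
  shows "((real d + 1) / real p) ^ p \<le> real (sdim p d)"
proof -
  have "((real d + 1) / real p) ^ p \<le> (real (p + d) / real p) ^ p"
    using assms by (intro power_mono divide_right_mono) auto
  also have "\<dots> \<le> real ((p + d) choose p)"
    by (rule binomial_ge_n_over_k_pow_k) simp
  finally show ?thesis
    by (simp add: sdim_def binomial_symmetric[of p "p + d"])
qed

lemma sdim_le: "real (sdim p d) \<le> (real p + real d) ^ p"
proof -
  have "(p + d) choose p \<le> (p + d) ^ p"
    by (rule binomial_le_pow) simp
  then show ?thesis
    unfolding sdim_def binomial_symmetric[of p "p + d", simplified, symmetric]
    by (metis of_nat_add of_nat_le_iff of_nat_power)
qed

lemma sdim_mult_christoffel_ge:
  fixes \<mu> :: "(real^'n::finite) measure"
  assumes \<mu>: "\<mu> = density lborel g" and g: "g \<in> borel_measurable lborel"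
    and finite: "\<And>P. P \<in> polys_deg d \<Longrightarrow> (\<integral>\<^sup>+ x. ennreal ((P x)\<^sup>2) \<partial>\<mu>) < top"
    and g_ge: "\<And>z. z \<in> ball y e \<Longrightarrow> ennreal wm \<le> g z" and "wm \<ge> 0" "e > 0"
  shows "wm * (pi * e / (4 * CARD('n)\<^sup>2)) ^ CARD('n) \<le> real (sdim CARD('n) d) * christoffel \<mu> d y"
proof -
  let ?p = "CARD('n)"
  have "(real d + 1) / ?p * (pi * e / (4 * ?p * (real d + 1))) = pi * e / (4 * ?p\<^sup>2)"
    by (simp add: divide_simps power2_eq_square)
  then have "wm * (pi * e / (4 * ?p\<^sup>2)) ^ ?p
               = ((real d + 1) / ?p) ^ ?p * (wm * (pi * e / (4 * ?p * (real d + 1))) ^ ?p)"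
    by (metis power_mult_distrib mult.left_commute)
  also have "\<dots> \<le> real (sdim ?p d) * christoffel \<mu> d y"
    using \<open>wm \<ge> 0\<close> \<open>e > 0\<close>
    by (intro mult_mono sdim_ge christoffel_ge_of_density_ge_on_ball[OF \<mu> g finite g_ge])
       (auto simp: Suc_le_eq)
  finally show ?thesis .
qed

lemma polys_deg_dist_sq: "(\<lambda>y. (dist y x)\<^sup>2) \<in> polys_deg 2"
  for x :: "real^'n::finite"
proof -
  have "(\<lambda>y::real^'n. y $ i - x $ i) \<in> polys_deg 1" for i
    using polys_deg_add[OF polys_deg_coord[of 1 i] polys_deg_const[of "- x $ i"]] by simp
  then have "(\<lambda>y::real^'n. \<Sum>i\<in>UNIV. (y $ i - x $ i) * (y $ i - x $ i)) \<in> polys_deg (1 + 1)"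
    by (intro polys_deg_sum polys_deg_mult) auto
  then have "(\<lambda>y::real^'n. \<Sum>i\<in>UNIV. (y $ i - x $ i) * (y $ i - x $ i)) \<in> polys_deg 2"
    by (simp only: one_add_one)
  moreover have "(dist y x)\<^sup>2 = (\<Sum>i\<in>UNIV. (y $ i - x $ i) * (y $ i - x $ i))" for y :: "real^'n"
    by (simp add: dist_norm power2_norm_eq_inner inner_vec_def)
  ultimately show ?thesis by simp
qed

lemma dist_le_infdist_add_diameter:
  fixes S :: "'a::heine_borel set"
  assumes "compact S" "y \<in> S"
  shows "dist y x \<le> infdist x S + diameter S"
proof -
  obtain s where "s \<in> S" "infdist x S = dist x s"
    using infdist_attains_inf[OF compact_imp_closed[OF \<open>compact S\<close>], of x] \<open>y \<in> S\<close> by blast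
  moreover have "dist s y \<le> diameter S"
    using compact_imp_bounded[OF \<open>compact S\<close>] \<open>s \<in> S\<close> \<open>y \<in> S\<close> by (rule diameter_bounded_bound)
  ultimately show ?thesis
    using dist_triangle[of y x s] by (simp add: dist_commute)
qed

text \<open>On \<open>S\<close> the base \<open>1 - |y - x|\<^sup>2 / R\<^sup>2\<close> of the needle lies in \<open>[0, 1 - (t / R)\<^sup>2]\<close>,
  where \<open>t = infdist x S \<ge> r\<close> and \<open>R = t + diam S\<close>; and \<open>t / (t + diam S)\<close> increases with \<open>t\<close>.\<close>
lemma needle_polynomial:
  fixes S :: "(real^'n::finite) set"
  assumes S: "compact S" and "r > 0" and "r \<le> infdist x S"
  obtains N where "N \<in> polys_deg d" "N x = 1"
    "\<And>y. y \<in> S \<Longrightarrow> (N y)\<^sup>2 \<le> (1 - r\<^sup>2 / (r + diameter S)\<^sup>2) ^ (d - 1)"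
proof
  define D t where "D = diameter S" and "t = infdist x S"
  define R where "R = t + D"
  define N where "N = (\<lambda>y. (1 - (dist y x)\<^sup>2 / R\<^sup>2) ^ (d div 2))"
  have "D \<ge> 0"
    unfolding D_def by (rule diameter_ge_0[OF compact_imp_bounded[OF S]])
  have "r \<le> t" "R > 0"
    using \<open>r > 0\<close> \<open>r \<le> infdist x S\<close> \<open>D \<ge> 0\<close> by (auto simp: t_def R_def)
  have "(\<lambda>y. 1 + (- 1 / R\<^sup>2) * (dist y x)\<^sup>2) \<in> polys_deg 2"
    by (intro polys_deg_add polys_deg_const polys_deg_cmult polys_deg_dist_sq)
  from polys_deg_power[OF this, of "d div 2"] have "N \<in> polys_deg (2 * (d div 2))"
    by (simp add: N_def)
  then show "N \<in> polys_deg d"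
    by (rule polys_deg_mono) simp
  show "N x = 1"
    by (simp add: N_def)
  fix y
  assume "y \<in> S"
  define q where "q = 1 - r\<^sup>2 / (r + D)\<^sup>2"
  define u where "u = 1 - (dist y x)\<^sup>2 / R\<^sup>2"
  have "t \<le> dist y x"
    unfolding t_def using infdist_le[OF \<open>y \<in> S\<close>, of x] by (simp add: dist_commute)
  have "dist y x \<le> R"
    unfolding R_def t_def D_def by (rule dist_le_infdist_add_diameter[OF S \<open>y \<in> S\<close>])
  then have "0 \<le> u"
    using \<open>R > 0\<close> by (simp add: u_def divide_le_eq_1 power_mono)
  have "r / (r + D) \<le> t / R"
    using \<open>r > 0\<close> \<open>r \<le> t\<close> \<open>D \<ge> 0\<close> \<open>R > 0\<close>
    by (simp add: R_def divide_simps mult_left_mono algebra_simps)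
  also have "\<dots> \<le> dist y x / R"
    using \<open>t \<le> dist y x\<close> \<open>R > 0\<close> by (simp add: divide_right_mono)
  finally have "(r / (r + D))\<^sup>2 \<le> (dist y x / R)\<^sup>2"
    using \<open>r > 0\<close> \<open>D \<ge> 0\<close> by (intro power_mono) auto
  then have "u \<le> q"
    by (simp add: u_def q_def power_divide)
  have "0 \<le> q" "q \<le> 1"
    using \<open>0 \<le> u\<close> \<open>u \<le> q\<close> by (auto simp: q_def)
  have "(N y)\<^sup>2 = u ^ (2 * (d div 2))"
    by (simp add: N_def u_def power_mult[symmetric] mult.commute)
  also have "\<dots> \<le> q ^ (2 * (d div 2))"
    using \<open>0 \<le> u\<close> \<open>u \<le> q\<close> by (intro power_mono)
  also have "\<dots> \<le> q ^ (d - 1)"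
    using \<open>0 \<le> q\<close> \<open>q \<le> 1\<close> by (intro power_decreasing) auto
  finally show "(N y)\<^sup>2 \<le> (1 - r\<^sup>2 / (r + diameter S)\<^sup>2) ^ (d - 1)"
    by (simp add: q_def D_def)
qed

section \<open>The degree condition\<close>

lemma omega_pos: "omega p > 0"
  unfolding omega_def by (intro divide_pos_pos mult_pos_pos Gamma_real_pos) auto

lemma alpha_th_nonneg_le:
  assumes "wm > 0" "\<delta> > 0"
  shows "0 \<le> alpha_th p wm \<delta> d" "alpha_th p wm \<delta> d \<le> wm * \<delta> ^ p * omega p"
proof -
  let ?N = "(real d + 1) * (real d + 2) * (real d + 3)"
  let ?M = "(real d + real p + 1) * (real d + real p + 2) * (2 * real d + real p + 6)"
  have "0 < ?M" "?N \<le> ?M"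
    by (auto intro!: mult_pos_pos mult_mono)
  then have "0 \<le> ?N / ?M" "?N / ?M \<le> 1"
    by auto
  moreover have alpha: "alpha_th p wm \<delta> d = (wm * \<delta> ^ p * omega p) * (?N / ?M)"
    unfolding alpha_th_def by (simp add: field_simps)
  moreover have "0 \<le> wm * \<delta> ^ p * omega p"
    using assms omega_pos[of p] by simp
  ultimately show "0 \<le> alpha_th p wm \<delta> d" "alpha_th p wm \<delta> d \<le> wm * \<delta> ^ p * omega p"
    using mult_left_mono[of "?N / ?M" 1 "wm * \<delta> ^ p * omega p"] by simp_all
qed

lemma alpha_th_tendsto_0:
  assumes "wm > 0" "1 \<le> p" "\<And>k. \<delta> k > 0" "\<delta> \<longlonglongrightarrow> 0"
  shows "(\<lambda>k. alpha_th p wm (\<delta> k) (d k)) \<longlonglongrightarrow> 0"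
proof (rule tendsto_sandwich[of "\<lambda>_. 0" _ _ "\<lambda>k. wm * \<delta> k ^ p * omega p"])
  have "(\<lambda>k. wm * \<delta> k ^ p * omega p) \<longlonglongrightarrow> wm * 0 ^ p * omega p"
    by (intro tendsto_intros assms)
  then show "(\<lambda>k. wm * \<delta> k ^ p * omega p) \<longlonglongrightarrow> 0"
    using \<open>1 \<le> p\<close> by (simp add: power_0_left)
qed (use alpha_th_nonneg_le[OF \<open>wm > 0\<close> \<open>\<And>k. \<delta> k > 0\<close>] in auto)

lemma deg_cond_imp_le_alpha_th:
  assumes "deg_cond p D wm \<delta> d"
  shows "2 powr (3 - \<delta> * real d / (\<delta> + D)) * real d ^ p * (exp 1 / real p) ^ p \<le> alpha_th p wm \<delta> d"
proof -
  let ?X = "2 powr (3 - \<delta> * real d / (\<delta> + D)) * real d ^ p * (exp 1 / real p) ^ p"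
  have "?X * 1 \<le> ?X * exp (real p ^ 2 / real d)"
    by (intro mult_left_mono) auto
  then show ?thesis
    using assms unfolding deg_cond_def by linarith
qed

lemma deg_cond_degrees_tendsto_infinity:
  assumes "1 \<le> p" "D > 0" "\<And>k. \<delta> k > 0" "\<And>k. d k > 0"
    and "(\<lambda>k. alpha_th p wm (\<delta> k) (d k)) \<longlonglongrightarrow> 0"
    and deg: "\<And>k. deg_cond p D wm (\<delta> k) (d k)"
  shows "filterlim d at_top sequentially"
  unfolding filterlim_at_top
proof
  fix N :: nat
  define c where "c = 2 powr (3 - real N) * (exp 1 / real p) ^ p"
  have "c > 0"
    using \<open>1 \<le> p\<close> by (simp add: c_def)
  with assms(5) have "eventually (\<lambda>k. alpha_th p wm (\<delta> k) (d k) < c) sequentially"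
    by (rule order_tendstoD)
  then show "eventually (\<lambda>k. N \<le> d k) sequentially"
  proof eventually_elim
    case (elim k)
    show "N \<le> d k"
    proof (rule ccontr)
      assume "\<not> N \<le> d k"
      have "\<delta> k * real (d k) / (\<delta> k + D) \<le> \<delta> k * real (d k) / \<delta> k"
        using assms(2) assms(3)[of k] by (intro divide_left_mono) auto
      also have "\<dots> \<le> real N"
        using \<open>\<not> N \<le> d k\<close> assms(3)[of k] by simp
      finally have "2 powr (3 - real N) * 1 \<le> 2 powr (3 - \<delta> k * real (d k) / (\<delta> k + D)) * real (d k) ^ p"
        using assms(4)[of k] by (intro mult_mono) auto
      then have "c \<le> 2 powr (3 - \<delta> k * real (d k) / (\<delta> k + D)) * real (d k) ^ p * (exp 1 / real p) ^ p"
        unfolding c_def by (intro mult_right_mono) auto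
      with deg_cond_imp_le_alpha_th[OF deg[of k]] elim show False
        by simp
    qed
  qed
qed

text \<open>Since \<open>q \<le> q2\<^sup>2\<close>, the power \<open>q ^ (d - 1)\<close> is at most \<open>q2 ^ (d - 2) * q2 ^ d\<close>: the
  factor \<open>q2 ^ d\<close> is dominated by the factor \<open>2 powr (- \<delta> d / (\<delta> + D))\<close> of the degree
  condition, while \<open>q2 ^ (d - 2)\<close> absorbs the polynomial growth of \<open>s(d)\<close>.\<close>
lemma sdim_mult_power_lt_alpha_th:
  fixes q q2 \<delta> D :: real
  assumes "1 \<le> p" "2 \<le> d" "\<delta> > 0" "D > 0"
    and "0 \<le> q" "q \<le> q2\<^sup>2" "0 < q2" "q2 \<le> 2 powr (- \<delta> / D)"
    and small: "(1 + real p) ^ p * q2 ^ (d - 2) < 8 * (exp 1 / real p) ^ p"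
    and "deg_cond p D wm \<delta> d"
  shows "real (sdim p d) * q ^ (d - 1) < alpha_th p wm \<delta> d"
proof -
  have "real p * 1 \<le> real p * real d"
    using \<open>2 \<le> d\<close> by (intro mult_left_mono) auto
  then have "real p + real d \<le> (1 + real p) * real d"
    by (simp add: algebra_simps)
  then have "(real p + real d) ^ p \<le> ((1 + real p) * real d) ^ p"
    by (intro power_mono) auto
  then have sdim: "real (sdim p d) \<le> (1 + real p) ^ p * real d ^ p"
    using sdim_le[of p d] by (simp add: power_mult_distrib)
  have exponent: "2 * (d - 1) = (d - 2) + d"
    using \<open>2 \<le> d\<close> by arith
  have "q ^ (d - 1) \<le> (q2\<^sup>2) ^ (d - 1)"
    using assms by (intro power_mono) auto
  also have "\<dots> = q2 ^ ((d - 2) + d)"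
    unfolding exponent[symmetric] by (simp add: power_mult)
  also have "\<dots> = q2 ^ (d - 2) * q2 ^ d"
    by (rule power_add)
  finally have q_power: "q ^ (d - 1) \<le> q2 ^ (d - 2) * q2 ^ d" .
  have "q2 ^ d \<le> (2 powr (- \<delta> / D)) ^ d"
    using assms by (intro power_mono) auto
  also have "\<dots> = 2 powr (real d * (- \<delta> / D))"
    by (simp add: powr_power)
  also have "\<dots> \<le> 2 powr (- \<delta> * real d / (\<delta> + D))"
    using assms by (intro powr_mono) (auto simp: field_simps intro!: divide_left_mono)
  finally have q2_power: "q2 ^ d \<le> 2 powr (- \<delta> * real d / (\<delta> + D))" .
  have "real (sdim p d) * q ^ (d - 1) \<le> ((1 + real p) ^ p * real d ^ p) * (q2 ^ (d - 2) * q2 ^ d)"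
    using sdim q_power \<open>0 \<le> q\<close> by (intro mult_mono) auto
  also have "\<dots> = ((1 + real p) ^ p * q2 ^ (d - 2)) * (real d ^ p * q2 ^ d)"
    by (simp add: mult_ac)
  also have "\<dots> < 8 * (exp 1 / real p) ^ p * (real d ^ p * q2 ^ d)"
    using small \<open>2 \<le> d\<close> \<open>0 < q2\<close> by (intro mult_strict_right_mono) auto
  also have "\<dots> \<le> 8 * (exp 1 / real p) ^ p * (real d ^ p * 2 powr (- \<delta> * real d / (\<delta> + D)))"
    using q2_power by (intro mult_left_mono) auto
  also have "\<dots> = 2 powr (3 - \<delta> * real d / (\<delta> + D)) * real d ^ p * (exp 1 / real p) ^ p"
    by (simp add: powr_diff powr_minus divide_inverse mult_ac)
  also have "\<dots> \<le> alpha_th p wm \<delta> d"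
    using deg_cond_imp_le_alpha_th[OF \<open>deg_cond p D wm \<delta> d\<close>] .
  finally show ?thesis .
qed

lemma eventually_sdim_mult_power_lt_alpha_th:
  fixes q D :: real
  assumes "1 \<le> p" "D > 0" "0 \<le> q" "q < 1"
    and "\<And>k. \<delta> k > 0" "\<delta> \<longlonglongrightarrow> 0" "filterlim d at_top sequentially"
    and deg: "\<And>k. deg_cond p D wm (\<delta> k) (d k)"
  shows "eventually (\<lambda>k. real (sdim p (d k)) * q ^ (d k - 1) < alpha_th p wm (\<delta> k) (d k)) sequentially"
proof -
  define q2 where "q2 = sqrt ((1 + q) / 2)"
  have "0 < q2" "q2 < 1" "q \<le> q2\<^sup>2"
    using \<open>0 \<le> q\<close> \<open>q < 1\<close> by (auto simp: q2_def)
  have "(\<lambda>n. (1 + real p) ^ p * q2 ^ n) \<longlonglongrightarrow> (1 + real p) ^ p * 0"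
    using \<open>0 < q2\<close> \<open>q2 < 1\<close> by (intro tendsto_intros LIMSEQ_power_zero) auto
  from order_tendstoD(2)[OF this, of "8 * (exp 1 / real p) ^ p"]
  have "eventually (\<lambda>n. (1 + real p) ^ p * q2 ^ n < 8 * (exp 1 / real p) ^ p) sequentially"
    using \<open>1 \<le> p\<close> by simp
  then have "eventually (\<lambda>k. (1 + real p) ^ p * q2 ^ (d k - 2) < 8 * (exp 1 / real p) ^ p) sequentially"
    using filterlim_compose[OF filterlim_minus_const_nat_at_top assms(7)]
    by (rule eventually_compose_filterlim)
  moreover have "eventually (\<lambda>k. 2 \<le> d k) sequentially"
    using assms(7) by (simp add: filterlim_at_top)
  moreover have "(\<lambda>k. 2 powr (- \<delta> k / D)) \<longlonglongrightarrow> 2 powr (- 0 / D)"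
    using \<open>D > 0\<close> by (intro tendsto_intros assms) auto
  then have "eventually (\<lambda>k. q2 < 2 powr (- \<delta> k / D)) sequentially"
    using \<open>q2 < 1\<close> by (intro order_tendstoD(1)) auto
  ultimately show ?thesis
  proof eventually_elim
    case (elim k)
    then show ?case
      using assms \<open>0 < q2\<close> \<open>q \<le> q2\<^sup>2\<close> by (intro sdim_mult_power_lt_alpha_th) auto
  qed
qed

section \<open>Hausdorff convergence of squeezed sets\<close>

lemma eventually_ball_compact:
  assumes "compact K"
    and loc: "\<And>z. z \<in> K \<Longrightarrow> \<exists>U. open U \<and> z \<in> U \<and> eventually (\<lambda>k. \<forall>y\<in>U. Q k y) F"
  shows "eventually (\<lambda>k. \<forall>y\<in>K. Q k y) F"
proof -
  from loc obtain U where U: "\<And>z. z \<in> K \<Longrightarrow> open (U z) \<and> z \<in> U z \<and> eventually (\<lambda>k. \<forall>y\<in>U z. Q k y) F"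
    by metis
  obtain T where T: "T \<subseteq> K" "finite T" "K \<subseteq> \<Union>(U ` T)"
    using compactE_image[OF \<open>compact K\<close>, of K U] U by blast
  have "eventually (\<lambda>k. \<forall>z\<in>T. \<forall>y\<in>U z. Q k y) F"
    using T U by (intro eventually_ball_finite) auto
  then show ?thesis
    by eventually_elim (use T in blast)
qed

lemma abs_hausdorff_dist_le:
  fixes X Y :: "'a::real_normed_vector set"
  assumes "X \<noteq> {}" "bounded X" "Y \<noteq> {}"
    and XY: "\<And>x. x \<in> X \<Longrightarrow> infdist x Y \<le> e" and YX: "\<And>y. y \<in> Y \<Longrightarrow> infdist y X \<le> e"
  shows "\<bar>hausdorff_dist X Y\<bar> \<le> e"
proof -
  obtain x0 y0 where "x0 \<in> X" "y0 \<in> Y"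
    using assms by blast
  obtain B where B: "\<And>x. x \<in> X \<Longrightarrow> norm x \<le> B"
    using \<open>bounded X\<close> by (auto simp: bounded_iff)
  have "infdist x Y \<le> B + norm y0" if "x \<in> X" for x
    using infdist_le[OF \<open>y0 \<in> Y\<close>, of x] B[OF that] norm_triangle_ineq4[of x y0]
    by (simp add: dist_norm)
  then have bdd: "bdd_above ((\<lambda>x. infdist x Y) ` X)"
    by (rule bdd_aboveI2)
  have "0 \<le> (SUP x\<in>X. infdist x Y)"
    using cSUP_upper[OF \<open>x0 \<in> X\<close> bdd] infdist_nonneg[of x0 Y] by linarith
  moreover have "(SUP x\<in>X. infdist x Y) \<le> e"
    using \<open>X \<noteq> {}\<close> XY by (intro cSUP_least) auto
  moreover have "(SUP y\<in>Y. infdist y X) \<le> e"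
    using \<open>Y \<noteq> {}\<close> YX by (intro cSUP_least) auto
  ultimately show ?thesis
    unfolding hausdorff_dist_def by auto
qed

lemma hausdorff_dist_tendsto_0I:
  fixes Y :: "'a::{heine_borel, real_normed_vector} set"
  assumes "compact Y" "Y \<noteq> {}"
    and close: "\<And>e. e > 0 \<Longrightarrow> eventually (\<lambda>k. (\<forall>x\<in>X k. infdist x Y < e) \<and> (\<forall>y\<in>Y. \<exists>x\<in>X k. dist x y < e)) F"
  shows "((\<lambda>k. hausdorff_dist (X k) Y) \<longlongrightarrow> 0) F"
  unfolding tendsto_iff
proof (intro allI impI)
  fix e :: real
  assume "e > 0"
  obtain B where B: "\<And>y. y \<in> Y \<Longrightarrow> norm y \<le> B"
    using compact_imp_bounded[OF \<open>compact Y\<close>] by (auto simp: bounded_iff)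
  have "norm x \<le> B + 1" if "infdist x Y < 1" for x
  proof -
    obtain y where "y \<in> Y" "infdist x Y = dist x y"
      using infdist_attains_inf[OF compact_imp_closed[OF \<open>compact Y\<close>] \<open>Y \<noteq> {}\<close>] by metis
    moreover have "norm x \<le> norm y + norm (x - y)"
      by (rule norm_triangle_sub)
    ultimately show ?thesis
      using that B[of y] by (simp add: dist_norm)
  qed
  then have bounded: "bounded {x. infdist x Y < 1}"
    unfolding bounded_iff by blast
  have "e / 2 > 0"
    using \<open>e > 0\<close> by simp
  from close[OF this] close[OF zero_less_one]
  show "eventually (\<lambda>k. dist (hausdorff_dist (X k) Y) 0 < e) F"
  proof eventually_elim
    case (elim k)
    have "\<bar>hausdorff_dist (X k) Y\<bar> \<le> e / 2"
    proof (rule abs_hausdorff_dist_le)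
      show "X k \<noteq> {}"
        using elim \<open>Y \<noteq> {}\<close> by blast
      show "bounded (X k)"
        using elim by (intro bounded_subset[OF bounded]) blast
      show "infdist x Y \<le> e / 2" if "x \<in> X k" for x
        using elim that by (simp add: less_imp_le)
      show "infdist y (X k) \<le> e / 2" if "y \<in> Y" for y
      proof -
        obtain x where "x \<in> X k" "dist x y < e / 2"
          using elim \<open>y \<in> Y\<close> by blast
        then show ?thesis
          by (intro infdist_le2[of x]) (auto simp: dist_commute)
      qed
    qed fact
    then show ?case
      using \<open>e > 0\<close> by simp
  qed
qed

lemma frontier_meets_ball:
  fixes A :: "'a::real_normed_vector set"
  assumes "a \<in> A" "a \<in> ball z e" "c \<notin> A" "c \<in> ball z e"
  shows "\<exists>y\<in>frontier A. y \<in> ball z e"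
proof -
  have "closed_segment a c \<inter> frontier A \<noteq> {}"
    using assms by (intro connected_Int_frontier connected_segment) auto
  moreover have "closed_segment a c \<subseteq> ball z e"
    using assms by (intro closed_segment_subset convex_ball)
  ultimately show ?thesis by blast
qed

text \<open>If the frontier of \<open>A\<close> came \<open>e\<close>-far from that of \<open>S\<close>, the ball of radius \<open>e\<close> around
  it would lie inside \<open>S\<close> or outside \<open>S\<close>: the first contradicts \<open>inner\<close>, the second \<open>outer\<close>.\<close>
lemma infdist_frontier_lt:
  fixes S A :: "'a::euclidean_space set"
  assumes S: "closed S" "S \<noteq> {}" and "e > 0"
    and outer: "\<And>x. x \<in> A \<Longrightarrow> infdist x S < e / 2"
    and inner: "\<And>x. ball x (e / 2) \<subseteq> interior S \<Longrightarrow> x \<in> A"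
    and "y \<in> frontier A"
  shows "infdist y (frontier S) < e"
proof (rule ccontr)
  assume "\<not> infdist y (frontier S) < e"
  then have "ball y e \<inter> frontier S = {}"
    using infdist_le[of _ "frontier S" y] by (force simp: dist_commute)
  then have "ball y e \<inter> S = {} \<or> ball y e \<subseteq> S"
    using connected_Int_frontier[of "ball y e" S] by auto
  then show False
  proof
    assume "ball y e \<inter> S = {}"
    obtain s where "s \<in> S" "infdist y S = dist y s"
      using infdist_attains_inf[OF S] by metis
    moreover have "s \<notin> ball y e"
      using \<open>s \<in> S\<close> \<open>ball y e \<inter> S = {}\<close> by blast
    ultimately have "e \<le> infdist y S"
      by (simp add: not_less)
    moreover have "closure A \<subseteq> {x. infdist x S \<le> e / 2}"
    proof (rule closure_minimal)
      show "A \<subseteq> {x. infdist x S \<le> e / 2}"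
        using outer by (auto intro: less_imp_le)
      show "closed {x. infdist x S \<le> e / 2}"
        by (intro closed_Collect_le continuous_intros)
    qed
    ultimately show False
      using \<open>y \<in> frontier A\<close> \<open>e > 0\<close> by (force simp: frontier_def)
  next
    assume "ball y e \<subseteq> S"
    then have "ball y e \<subseteq> interior S"
      by (simp add: interior_maximal)
    have "ball y (e / 2) \<subseteq> A"
    proof
      fix y'
      assume "y' \<in> ball y (e / 2)"
      then have "ball y' (e / 2) \<subseteq> ball y e"
        by (subst ball_subset_ball_iff) (simp add: dist_commute)
      then show "y' \<in> A"
        using \<open>ball y e \<subseteq> interior S\<close> by (intro inner) auto
    qed
    then have "y \<in> interior A"
      using \<open>e > 0\<close> by (meson centre_in_ball half_gt_zero interior_maximal open_ball subsetD)
    then show False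
      using \<open>y \<in> frontier A\<close> by (simp add: frontier_def)
  qed
qed

lemma eventually_mem_of_mem_interior:
  assumes inner: "\<And>e. e > 0 \<Longrightarrow> eventually (\<lambda>k. \<forall>x. ball x e \<subseteq> interior S \<longrightarrow> x \<in> A k) F"
    and "a \<in> interior S"
  shows "eventually (\<lambda>k. a \<in> A k) F"
proof -
  obtain r where "r > 0" "ball a r \<subseteq> interior S"
    using \<open>a \<in> interior S\<close> open_interior by (meson openE)
  from inner[OF \<open>r > 0\<close>] show ?thesis
    by eventually_elim (use \<open>ball a r \<subseteq> interior S\<close> in blast)
qed

lemma eventually_near_every_point:
  fixes S :: "'a::euclidean_space set"
  assumes "compact S" "closure (interior S) = S" "e > 0"
    and inner: "\<And>e. e > 0 \<Longrightarrow> eventually (\<lambda>k. \<forall>x. ball x e \<subseteq> interior S \<longrightarrow> x \<in> A k) F"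
  shows "eventually (\<lambda>k. \<forall>z\<in>S. \<exists>x\<in>A k. dist x z < e) F"
proof (rule eventually_ball_compact[OF \<open>compact S\<close>])
  fix z
  assume "z \<in> S"
  then obtain a where "a \<in> interior S" "dist a z < e / 2"
    using assms(2,3) closure_approachable[of z "interior S"] by (metis half_gt_zero)
  have "eventually (\<lambda>k. a \<in> A k) F"
    using inner \<open>a \<in> interior S\<close> by (rule eventually_mem_of_mem_interior)
  then have "eventually (\<lambda>k. \<forall>y\<in>ball z (e / 2). \<exists>x\<in>A k. dist x y < e) F"
  proof eventually_elim
    case (elim k)
    show ?case
    proof
      fix y
      assume "y \<in> ball z (e / 2)"
      then have "dist a y < e"
        using \<open>dist a z < e / 2\<close> dist_triangle[of a y z] by (simp add: dist_commute)
      then show "\<exists>x\<in>A k. dist x y < e"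
        using elim by blast
    qed
  qed
  then show "\<exists>U. open U \<and> z \<in> U \<and> eventually (\<lambda>k. \<forall>y\<in>U. \<exists>x\<in>A k. dist x y < e) F"
    using \<open>e > 0\<close> by (intro exI[of _ "ball z (e / 2)"]) auto
qed

lemma eventually_near_every_frontier_point:
  fixes S :: "'a::euclidean_space set"
  assumes "compact S" "closure (interior S) = S" "S \<noteq> {}" "e > 0"
    and inner: "\<And>e. e > 0 \<Longrightarrow> eventually (\<lambda>k. \<forall>x. ball x e \<subseteq> interior S \<longrightarrow> x \<in> A k) F"
    and outer: "\<And>r. r > 0 \<Longrightarrow> eventually (\<lambda>k. \<forall>x. r \<le> infdist x S \<longrightarrow> x \<notin> A k) F"
  shows "eventually (\<lambda>k. \<forall>z\<in>frontier S. \<exists>y\<in>frontier (A k). dist y z < e) F"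
proof (rule eventually_ball_compact[OF compact_frontier[OF \<open>compact S\<close>]])
  fix z
  assume z: "z \<in> frontier S"
  then have "z \<in> closure (interior S)"
    using assms(2) by (metis Diff_iff closure_closure frontier_def)
  then obtain a where "a \<in> interior S" "dist a z < e / 2"
    using \<open>e > 0\<close> closure_approachable[of z "interior S"] by (metis half_gt_zero)
  have "z \<in> closure (- S)"
    using z by (simp add: frontier_def closure_complement)
  then obtain c where "c \<notin> S" "dist c z < e / 2"
    using \<open>e > 0\<close> closure_approachable[of z "- S"] by (meson ComplD half_gt_zero)
  have c_far: "infdist c S > 0"
    using \<open>c \<notin> S\<close> compact_imp_closed[OF \<open>compact S\<close>] \<open>S \<noteq> {}\<close> by (intro infdist_pos_not_in_closed)
  have "eventually (\<lambda>k. a \<in> A k) F"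
    using inner \<open>a \<in> interior S\<close> by (rule eventually_mem_of_mem_interior)
  from this outer[OF c_far]
  have "eventually (\<lambda>k. \<forall>w\<in>ball z (e / 2). \<exists>y\<in>frontier (A k). dist y w < e) F"
  proof eventually_elim
    case (elim k)
    then obtain y where "y \<in> frontier (A k)" "y \<in> ball z (e / 2)"
      using frontier_meets_ball[of a "A k" z "e / 2" c] \<open>dist a z < e / 2\<close> \<open>dist c z < e / 2\<close>
      by (auto simp: dist_commute)
    show ?case
    proof
      fix w
      assume "w \<in> ball z (e / 2)"
      then have "dist y w < e"
        using \<open>y \<in> ball z (e / 2)\<close> dist_triangle[of y w z] by (simp add: dist_commute)
      then show "\<exists>y\<in>frontier (A k). dist y w < e"
        using \<open>y \<in> frontier (A k)\<close> by blast
    qed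
  qed
  then show "\<exists>U. open U \<and> z \<in> U \<and> eventually (\<lambda>k. \<forall>w\<in>U. \<exists>y\<in>frontier (A k). dist y w < e) F"
    using \<open>e > 0\<close> by (intro exI[of _ "ball z (e / 2)"]) auto
qed

lemma hausdorff_dist_tendsto_0_of_squeeze:
  fixes S :: "'a::euclidean_space set"
  assumes "compact S" "closure (interior S) = S" "S \<noteq> {}"
    and inner: "\<And>e. e > 0 \<Longrightarrow> eventually (\<lambda>k. \<forall>x. ball x e \<subseteq> interior S \<longrightarrow> x \<in> A k) F"
    and outer: "\<And>r. r > 0 \<Longrightarrow> eventually (\<lambda>k. \<forall>x. r \<le> infdist x S \<longrightarrow> x \<notin> A k) F"
  shows "((\<lambda>k. hausdorff_dist (A k) S) \<longlongrightarrow> 0) F"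
proof (rule hausdorff_dist_tendsto_0I[OF \<open>compact S\<close> \<open>S \<noteq> {}\<close>])
  fix e :: real
  assume "e > 0"
  have "eventually (\<lambda>k. \<forall>z\<in>S. \<exists>x\<in>A k. dist x z < e) F"
    using \<open>e > 0\<close> inner by (rule eventually_near_every_point[OF assms(1,2)])
  with outer[OF \<open>e > 0\<close>]
  show "eventually (\<lambda>k. (\<forall>x\<in>A k. infdist x S < e) \<and> (\<forall>y\<in>S. \<exists>x\<in>A k. dist x y < e)) F"
    by eventually_elim (auto simp: not_le)
qed

lemma hausdorff_dist_frontier_tendsto_0_of_squeeze:
  fixes S :: "'a::euclidean_space set"
  assumes "compact S" "closure (interior S) = S" "S \<noteq> {}"
    and inner: "\<And>e. e > 0 \<Longrightarrow> eventually (\<lambda>k. \<forall>x. ball x e \<subseteq> interior S \<longrightarrow> x \<in> A k) F"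
    and outer: "\<And>r. r > 0 \<Longrightarrow> eventually (\<lambda>k. \<forall>x. r \<le> infdist x S \<longrightarrow> x \<notin> A k) F"
  shows "((\<lambda>k. hausdorff_dist (frontier (A k)) (frontier S)) \<longlongrightarrow> 0) F"
proof (rule hausdorff_dist_tendsto_0I)
  show "compact (frontier S)"
    using \<open>compact S\<close> by (rule compact_frontier)
  have "S \<noteq> UNIV"
    using compact_imp_bounded[OF \<open>compact S\<close>] by auto
  then show "frontier S \<noteq> {}"
    using \<open>S \<noteq> {}\<close> by (rule frontier_not_empty[rotated])
  fix e :: real
  assume "e > 0"
  then have "e / 2 > 0"
    by simp
  have "eventually (\<lambda>k. \<forall>z\<in>frontier S. \<exists>y\<in>frontier (A k). dist y z < e) F"
    using \<open>e > 0\<close> inner outer by (rule eventually_near_every_frontier_point[OF assms(1-3)])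
  with outer[OF \<open>e / 2 > 0\<close>] inner[OF \<open>e / 2 > 0\<close>]
  show "eventually (\<lambda>k. (\<forall>x\<in>frontier (A k). infdist x (frontier S) < e)
                     \<and> (\<forall>y\<in>frontier S. \<exists>x\<in>frontier (A k). dist x y < e)) F"
  proof eventually_elim
    case (elim k)
    have "infdist y (frontier S) < e" if "y \<in> frontier (A k)" for y
      by (rule infdist_frontier_lt[OF compact_imp_closed[OF \<open>compact S\<close>] \<open>S \<noteq> {}\<close> \<open>e > 0\<close> _ _ that])
        (use elim in \<open>auto simp: not_le\<close>)
    then show ?case
      using elim by blast
  qed
qed

section \<open>The superlevel sets of the Christoffel function\<close>

lemma eventually_sdim_mult_christoffel_ge_interior:
  fixes \<mu> :: "(real^'n::finite) measure"
  assumes \<mu>: "\<mu> = density lborel g" and g: "g \<in> borel_measurable lborel"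
    and finite: "\<And>d P. P \<in> polys_deg d \<Longrightarrow> (\<integral>\<^sup>+ x. ennreal ((P x)\<^sup>2) \<partial>\<mu>) < top"
    and g_ge: "\<And>x. x \<in> U \<Longrightarrow> ennreal wm \<le> g x" and "wm > 0"
    and "\<alpha> \<longlonglongrightarrow> 0" and "e > 0"
  shows "eventually (\<lambda>k. \<forall>x. ball x e \<subseteq> U \<longrightarrow> \<alpha> k \<le> real (sdim CARD('n) (d k)) * christoffel \<mu> (d k) x)
           sequentially"
proof -
  have "0 < wm * (pi * e / (4 * CARD('n)\<^sup>2)) ^ CARD('n)"
    using \<open>wm > 0\<close> \<open>e > 0\<close> by simp
  from order_tendstoD(2)[OF \<open>\<alpha> \<longlonglongrightarrow> 0\<close> this] show ?thesis
  proof eventually_elim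
    case (elim k)
    show ?case
    proof (intro allI impI)
      fix x
      assume "ball x e \<subseteq> U"
      then have "wm * (pi * e / (4 * CARD('n)\<^sup>2)) ^ CARD('n) \<le> real (sdim CARD('n) (d k)) * christoffel \<mu> (d k) x"
        using \<open>wm > 0\<close> \<open>e > 0\<close> by (intro sdim_mult_christoffel_ge[OF \<mu> g finite]) (auto intro: g_ge)
      then show "\<alpha> k \<le> real (sdim CARD('n) (d k)) * christoffel \<mu> (d k) x"
        using elim by simp
    qed
  qed
qed

lemma eventually_sdim_mult_christoffel_lt_far:
  fixes \<mu> :: "(real^'n::finite) measure"
  assumes \<mu>: "\<mu> = density lborel g" and g: "g \<in> borel_measurable lborel"
    and \<mu>_UNIV: "emeasure \<mu> UNIV = 1" and support: "\<And>x. g x \<noteq> 0 \<Longrightarrow> x \<in> S"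
    and S: "compact S" "diameter S > 0"
    and \<delta>: "\<And>k. \<delta> k > 0" "\<delta> \<longlonglongrightarrow> 0" and degrees: "filterlim d at_top sequentially"
    and deg: "\<And>k. deg_cond CARD('n) (diameter S) wm (\<delta> k) (d k)" and "r > 0"
  shows "eventually (\<lambda>k. \<forall>x. r \<le> infdist x S \<longrightarrow>
           real (sdim CARD('n) (d k)) * christoffel \<mu> (d k) x < alpha_th CARD('n) wm (\<delta> k) (d k)) sequentially"
proof -
  define q where "q = 1 - r\<^sup>2 / (r + diameter S)\<^sup>2"
  have "r\<^sup>2 < (r + diameter S)\<^sup>2"
    using \<open>r > 0\<close> \<open>diameter S > 0\<close> by (intro power_strict_mono) auto
  then have "0 \<le> q" "q < 1"
    using \<open>r > 0\<close> \<open>diameter S > 0\<close> by (auto simp: q_def divide_le_eq_1 less_imp_le)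
  with \<delta> degrees deg have "eventually (\<lambda>k. real (sdim CARD('n) (d k)) * q ^ (d k - 1)
                           < alpha_th CARD('n) wm (\<delta> k) (d k)) sequentially"
    by (intro eventually_sdim_mult_power_lt_alpha_th[where D="diameter S"]) (auto simp: Suc_le_eq S(2))
  then show ?thesis
  proof eventually_elim
    case (elim k)
    show ?case
    proof (intro allI impI)
      fix x
      assume "r \<le> infdist x S"
      then obtain N where N: "N \<in> polys_deg (d k)" "N x = 1" "\<And>y. y \<in> S \<Longrightarrow> (N y)\<^sup>2 \<le> q ^ (d k - 1)"
        using needle_polynomial[OF S(1) \<open>r > 0\<close>] unfolding q_def by blast
      have "christoffel \<mu> (d k) x \<le> q ^ (d k - 1)"
        using \<open>0 \<le> q\<close> N(3) support
        by (intro christoffel_le_of_poly_bounded_on_support[OF \<mu> g \<mu>_UNIV N(1,2)]) auto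
      then have "real (sdim CARD('n) (d k)) * christoffel \<mu> (d k) x \<le> real (sdim CARD('n) (d k)) * q ^ (d k - 1)"
        by (intro mult_left_mono) auto
      then show "real (sdim CARD('n) (d k)) * christoffel \<mu> (d k) x < alpha_th CARD('n) wm (\<delta> k) (d k)"
        using elim by linarith
    qed
  qed
qed

lemma diameter_pos_of_interior_nonempty:
  fixes S :: "'a::euclidean_space set"
  assumes "bounded S" "interior S \<noteq> {}"
  shows "diameter S > 0"
proof -
  obtain a e where "e > 0" "ball a e \<subseteq> S"
    using assms(2) by (meson ex_in_conv mem_interior)
  then have "diameter (ball a e) \<le> diameter S"
    using assms(1) by (intro diameter_subset)
  then show ?thesis
    using \<open>e > 0\<close> by simp
qed

lemma density_indicator_interior:
  fixes S :: "'a::euclidean_space set"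
  assumes "closed S" "set_integrable lborel (interior S) w"
    and g_def: "g = (\<lambda>x. ennreal (w x) * indicator (interior S) x)"
  shows "g \<in> borel_measurable lborel"
    and "\<And>x. g x \<noteq> 0 \<Longrightarrow> x \<in> S"
    and "emeasure (density lborel g) UNIV = emeasure (density lborel g) S"
proof -
  have "(\<lambda>x. indicator (interior S) x *\<^sub>R w x) \<in> borel_measurable lborel"
    using assms(2) unfolding set_integrable_def by (rule borel_measurable_integrable)
  moreover have "g = (\<lambda>x. ennreal (indicator (interior S) x *\<^sub>R w x))"
    by (auto simp: g_def indicator_def)
  ultimately show g: "g \<in> borel_measurable lborel"
    by simp
  show support: "g x \<noteq> 0 \<Longrightarrow> x \<in> S" for x
    using interior_subset by (auto simp: g_def indicator_def)
  have "(\<integral>\<^sup>+ x. g x * indicator UNIV x \<partial>lborel) = (\<integral>\<^sup>+ x. g x * indicator S x \<partial>lborel)"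
    using support by (intro nn_integral_cong) (auto simp: indicator_def)
  then show "emeasure (density lborel g) UNIV = emeasure (density lborel g) S"
    using g \<open>closed S\<close> by (simp add: emeasure_density borel_closed)
qed

theorem theorem3p11:
  fixes S :: "(real^'n::finite) set"
    and w :: "real^'n \<Rightarrow> real"
    and wm :: real
    and \<mu> :: "(real^'n) measure"
    and \<delta> :: "nat \<Rightarrow> real"
    and d :: "nat \<Rightarrow> nat"
    and Sk :: "nat \<Rightarrow> (real^'n) set"
  assumes "compact S"
    and "closure (interior S) = S"
    and "wm > 0"
    and "\<And>x. x \<in> interior S \<Longrightarrow> w x \<ge> wm"
    and "set_integrable lborel (interior S) w"
    and "\<mu> = density lborel (\<lambda>x. ennreal (w x) * indicator (interior S) x)"
    and "emeasure \<mu> S = 1"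
    and "decseq \<delta>"
    and "\<And>k. \<delta> k > 0"
    and "\<delta> \<longlonglongrightarrow> 0"
    and "\<And>k. d k > 0"
    and "\<And>k. deg_cond CARD('n) (diameter S) wm (\<delta> k) (d k)"
    and "\<And>k m. 0 < m \<Longrightarrow> m < d k \<Longrightarrow> \<not> deg_cond CARD('n) (diameter S) wm (\<delta> k) m"
    and "\<And>k. Sk k = {x. real (sdim CARD('n) (d k)) * christoffel \<mu> (d k) x
                          \<ge> alpha_th CARD('n) wm (\<delta> k) (d k)}"
  shows "((\<lambda>k. hausdorff_dist (Sk k) S) \<longlonglongrightarrow> 0) \<and>
         ((\<lambda>k. hausdorff_dist (frontier (Sk k)) (frontier S)) \<longlonglongrightarrow> 0)"
proof -
  define g where "g = (\<lambda>x. ennreal (w x) * indicator (interior S) x)"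
  note density = density_indicator_interior[OF compact_imp_closed[OF assms(1)] assms(5) g_def]
  have \<mu>: "\<mu> = density lborel g"
    using assms(6) by (simp add: g_def)
  have "S \<noteq> {}"
    using assms(7) by auto
  have "diameter S > 0"
    using assms(1,2) \<open>S \<noteq> {}\<close> by (intro diameter_pos_of_interior_nonempty compact_imp_bounded) auto
  have \<mu>_UNIV: "emeasure \<mu> UNIV = 1"
    using density(3) assms(7) \<mu> by simp
  have alpha: "(\<lambda>k. alpha_th CARD('n) wm (\<delta> k) (d k)) \<longlonglongrightarrow> 0"
    using assms(3,9,10) by (intro alpha_th_tendsto_0) (auto simp: Suc_le_eq)
  have degrees: "filterlim d at_top sequentially"
    using assms(9,11,12) \<open>diameter S > 0\<close> by (intro deg_cond_degrees_tendsto_infinity[OF _ _ _ _ alpha]) (auto simp: Suc_le_eq)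
  have inner: "eventually (\<lambda>k. \<forall>x. ball x e \<subseteq> interior S \<longrightarrow> x \<in> Sk k) sequentially" if "e > 0" for e
    using eventually_sdim_mult_christoffel_ge_interior[OF \<mu> density(1) _ _ assms(3) alpha that]
      nn_integral_poly_sq_finite[OF \<mu> density(1) assms(1) density(2)] \<mu>_UNIV assms(4,14)
    by (simp add: g_def ennreal_leI)
  have outer: "eventually (\<lambda>k. \<forall>x. r \<le> infdist x S \<longrightarrow> x \<notin> Sk k) sequentially" if "r > 0" for r
    using eventually_sdim_mult_christoffel_lt_far[OF \<mu> density(1) \<mu>_UNIV density(2) assms(1)
        \<open>diameter S > 0\<close> assms(9,10) degrees assms(12) that]
    by (simp add: assms(14) not_le)
  show ?thesis
    using hausdorff_dist_tendsto_0_of_squeeze[OF assms(1,2) \<open>S \<noteq> {}\<close> inner outer]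
      hausdorff_dist_frontier_tendsto_0_of_squeeze[OF assms(1,2) \<open>S \<noteq> {}\<close> inner outer]
    by blast
qed

end
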